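(* Let $\delta\in(0,1)$ and $\iota=\log(2|\mathcal{G}||\mathcal{T}||\Pi|/\delta)$. Let $\hat\pi\in\arg\max_{\pi\in\Pi}\max_{T\in\mathcal{T}}\mathrm{lb}(T,\pi)$ be the policy returned by the algorithm, and let $\hat T\in\arg\max_{T\in\mathcal{T}}\mathrm{lb}(T,\hat\pi)$. Then, with probability at least $1-\delta$ over the draw of the dataset $\mathcal{D}$, $$\eta(T^\star,\hat\pi)\ge \sup_{\pi\in\Pi}\Big\{\eta(T^\star,\pi)-\frac{6V_{\max}\epsilon_\rho(\pi)}{(1-\gamma)^2}-\frac{V_{\max}\epsilon_\mu(\pi)}{1-\gamma}\Big\}-\frac{\epsilon_V(\hat T,\hat\pi)}{1-\gamma}-\frac{4V_{\max}}{1-\gamma}\sqrt{\frac{\zeta\iota}{n}}-\frac{2\zeta V_{\max}\mathrm{TV}(\hat\mu,\mu)}{1-\gamma}.$$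
   Context: Setting: a discounted MDP with state space $\mathcal{S}$ and action space $\mathcal{A}$ (discrete, so distributions are probability mass functions), unknown true transition kernel $T^\star:\mathcal{S}\times\mathcal{A}\to\Delta(\mathcal{S})$, known reward $r:\mathcal{S}\times\mathcal{A}\to\mathbb{R}_{\ge 0}$ and discount $\gamma\in[0,1)$. For a transition kernel $T$ and a policy $\pi:\mathcal{S}\to\Delta(\mathcal{A})$, $V^\pi_T(s)=\mathbb{E}[\sum_{t\ge0}\gamma^t r(s_t,a_t)\mid s_0=s,\,a_t\sim\pi(s_t),\,s_{t+1}\sim T(s_t,a_t)]$. $R_{\max}=\max_{s,a}r(s,a)$, $V_{\max}=R_{\max}/(1-\gamma)$. The initial state is a fixed $s_0$, and $\eta(T,\pi)=V^\pi_T(s_0)$. The normalized discounted occupancy is $\rho^\pi_T(s,a)=(1-\gamma)\sum_{t\ge0}\gamma^t\Pr^\pi_T(s_t=s,a_t=a\mid s_0)$. The dataset $\mathcal{D}=\{(s_i,a_i,s_i')\}_{i=1}^n$ consists of $n$ i.i.d. samples from a distribution $\mu$ on $\mathcal{S}\times\mathcal{A}\times\mathcal{S}$ whose conditional law of $s'$ given $(s,a)$ is $T^\star(s,a)$; $\mu(s,a)$ also denotes its $(s,a)$-marginal. $\hat\mu$ is a given distribution on $\mathcal{S}\times\mathcal{A}$ (an estimate of $\mu$), and $\mathrm{TV}(p,q)=\sum_x|p(x)-q(x)|$ (this $\ell_1$ convention is used for all TV distances). There are finite classes $\mathcal{G}$ of functions $g:\mathcal{S}\to[0,V_{\max}]$,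 $\mathcal{T}$ of transition kernels (possibly $T^\star\notin\mathcal{T}$) and $\Pi$ of policies. A cutoff $\zeta>0$ is fixed. Truncated density ratio: $w_{\pi,T}(s,a)=\mathbf{1}\{\rho^\pi_T(s,a)/\hat\mu(s,a)\le\zeta\}\,\rho^\pi_T(s,a)/\hat\mu(s,a)$ (the ratio is $+\infty$ when $\hat\mu(s,a)=0<\rho^\pi_T(s,a)$). For $g\in\mathcal{G}$, $f^g_T(s,a)=\mathbb{E}_{s'\sim T(s,a)}[g(s')]$. Empirical loss: $\ell_w(g,T)=\big|\frac1n\sum_{i=1}^n w(s_i,a_i)\big(f^g_T(s_i,a_i)-g(s_i')\big)\big|$. Lower bound: $\mathrm{lb}(T,\pi)=\eta(T,\pi)-\frac{1}{1-\gamma}\Big(\sup_{g\in\mathcal{G}}\ell_{w_{\pi,T}}(g,T)+V_{\max}\mathbb{E}_{(s,a)\sim\rho^\pi_T}\big[\mathbf{1}\{\rho^\pi_T(s,a)/\hat\mu(s,a)>\zeta\}\big]\Big)$. Error terms: $\epsilon_V(T,\pi)=\inf_{g\in\mathcal{G}}\big|\mathbb{E}_{(s,a)\sim\mu}\big[w_{\pi,T}(s,a)\big(\mathbb{E}_{s'\sim T(s,a)}[(g-V^\pi_{T^\star})(s')]-\mathbb{E}_{s'\sim T^\star(s,a)}[(g-V^\pi_{T^\star})(s')]\big)\big]\big|$; $\epsilon_\rho(\pi)=\inf_{T\in\mathcal{T}}\mathbb{E}_{(s,a)\sim\rho^\pi_{T^\star}}[\mathrm{TV}(T(s,a),T^\star(s,a))]$;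 $\epsilon_\mu(\pi)=\mathbb{E}_{(s,a)\sim\rho^\pi_{T^\star}}\big[\mathbf{1}\{\rho^\pi_{T^\star}(s,a)/\hat\mu(s,a)>\zeta/2\}\big]$. *)

theory Defs
  imports "HOL-Probability.Probability"
begin

type_synonym ('s,'a) kernel = "'s \<Rightarrow> 'a \<Rightarrow> 's pmf"
type_synonym ('s,'a) policy = "'s \<Rightarrow> 'a pmf"

primrec sa_dist :: "('s,'a) kernel \<Rightarrow> ('s,'a) policy \<Rightarrow> 's \<Rightarrow> nat \<Rightarrow> ('s \<times> 'a) pmf" where
  "sa_dist T \<pi> s 0 = map_pmf (\<lambda>a. (s, a)) (\<pi> s)"
| "sa_dist T \<pi> s (Suc t) =
     bind_pmf (sa_dist T \<pi> s t)
       (\<lambda>(x, a). bind_pmf (T x a) (\<lambda>x'. map_pmf (\<lambda>a'. (x', a')) (\<pi> x')))"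

definition Vfun :: "('s \<Rightarrow> 'a \<Rightarrow> real) \<Rightarrow> real \<Rightarrow> ('s,'a) kernel \<Rightarrow> ('s,'a) policy \<Rightarrow> 's \<Rightarrow> real" where
  "Vfun r \<gamma> T \<pi> s = (\<Sum>t. \<gamma> ^ t * measure_pmf.expectation (sa_dist T \<pi> s t) (\<lambda>(x, a). r x a))"

definition eta :: "('s \<Rightarrow> 'a \<Rightarrow> real) \<Rightarrow> real \<Rightarrow> 's \<Rightarrow> ('s,'a) kernel \<Rightarrow> ('s,'a) policy \<Rightarrow> real" where
  "eta r \<gamma> s0 T \<pi> = Vfun r \<gamma> T \<pi> s0"

definition Rmax :: "('s \<Rightarrow> 'a \<Rightarrow> real) \<Rightarrow> real" where
  "Rmax r = (SUP x. case_prod r x)"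

definition Vmax :: "('s \<Rightarrow> 'a \<Rightarrow> real) \<Rightarrow> real \<Rightarrow> real" where
  "Vmax r \<gamma> = Rmax r / (1 - \<gamma>)"

definition occ :: "real \<Rightarrow> 's \<Rightarrow> ('s,'a) kernel \<Rightarrow> ('s,'a) policy \<Rightarrow> 's \<times> 'a \<Rightarrow> real" where
  "occ \<gamma> s0 T \<pi> x = (1 - \<gamma>) * (\<Sum>t. \<gamma> ^ t * pmf (sa_dist T \<pi> s0 t) x)"

definition occ_exp :: "('x \<Rightarrow> real) \<Rightarrow> ('x \<Rightarrow> real) \<Rightarrow> real" where
  "occ_exp \<rho> f = infsum (\<lambda>x. \<rho> x * f x) UNIV"

text \<open>TV distance, l1 convention.\<close>
definition TV :: "'x pmf \<Rightarrow> 'x pmf \<Rightarrow> real" where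
  "TV p q = infsum (\<lambda>x. \<bar>pmf p x - pmf q x\<bar>) UNIV"

text \<open>Event rho(x)/muhat(x) > c, with the ratio = +infinity when muhat(x) = 0 < rho(x)
  (and not exceeding when both vanish).\<close>
definition ratio_exceeds :: "real \<Rightarrow> ('x \<Rightarrow> real) \<Rightarrow> 'x pmf \<Rightarrow> 'x \<Rightarrow> bool" where
  "ratio_exceeds c \<rho> \<mu>h x =
     (if pmf \<mu>h x = 0 then \<rho> x > 0 else \<rho> x / pmf \<mu>h x > c)"

definition wtr :: "real \<Rightarrow> ('x \<Rightarrow> real) \<Rightarrow> 'x pmf \<Rightarrow> 'x \<Rightarrow> real" where
  "wtr \<zeta> \<rho> \<mu>h x =
     (if ratio_exceeds \<zeta> \<rho> \<mu>h x \<or> pmf \<mu>h x = 0 then 0 else \<rho> x / pmf \<mu>h x)"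

definition w_pol :: "real \<Rightarrow> 's \<Rightarrow> real \<Rightarrow> ('s \<times> 'a) pmf \<Rightarrow> ('s,'a) policy \<Rightarrow> ('s,'a) kernel
    \<Rightarrow> 's \<times> 'a \<Rightarrow> real" where
  "w_pol \<gamma> s0 \<zeta> \<mu>h \<pi> T = wtr \<zeta> (occ \<gamma> s0 T \<pi>) \<mu>h"

definition fT :: "('s,'a) kernel \<Rightarrow> ('s \<Rightarrow> real) \<Rightarrow> 's \<Rightarrow> 'a \<Rightarrow> real" where
  "fT T g s a = measure_pmf.expectation (T s a) g"

definition emp_loss :: "('s \<times> 'a \<Rightarrow> real) \<Rightarrow> ('s \<times> 'a \<times> 's) list \<Rightarrow> ('s \<Rightarrow> real)
    \<Rightarrow> ('s,'a) kernel \<Rightarrow> real" where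
  "emp_loss w D g T =
     \<bar>(1 / real (length D)) * (\<Sum>(s, a, s') \<leftarrow> D. w (s, a) * (fT T g s a - g s'))\<bar>"

definition lb :: "('s \<Rightarrow> 'a \<Rightarrow> real) \<Rightarrow> real \<Rightarrow> 's \<Rightarrow> real \<Rightarrow> ('s \<times> 'a) pmf
    \<Rightarrow> ('s \<Rightarrow> real) set \<Rightarrow> ('s \<times> 'a \<times> 's) list \<Rightarrow> ('s,'a) kernel \<Rightarrow> ('s,'a) policy \<Rightarrow> real" where
  "lb r \<gamma> s0 \<zeta> \<mu>h G D T \<pi> =
     eta r \<gamma> s0 T \<pi> - (1 / (1 - \<gamma>)) *
       ((SUP g\<in>G. emp_loss (w_pol \<gamma> s0 \<zeta> \<mu>h \<pi> T) D g T)
        + Vmax r \<gamma> * occ_exp (occ \<gamma> s0 T \<pi>)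
             (\<lambda>x. if ratio_exceeds \<zeta> (occ \<gamma> s0 T \<pi>) \<mu>h x then 1 else 0))"

definition sa_marg :: "('s \<times> 'a \<times> 's) pmf \<Rightarrow> ('s \<times> 'a) pmf" where
  "sa_marg \<mu> = map_pmf (\<lambda>(s, a, s'). (s, a)) \<mu>"

definition eps_V :: "('s \<Rightarrow> 'a \<Rightarrow> real) \<Rightarrow> real \<Rightarrow> 's \<Rightarrow> real \<Rightarrow> ('s \<times> 'a) pmf
    \<Rightarrow> ('s \<times> 'a \<times> 's) pmf \<Rightarrow> ('s,'a) kernel \<Rightarrow> ('s \<Rightarrow> real) set
    \<Rightarrow> ('s,'a) kernel \<Rightarrow> ('s,'a) policy \<Rightarrow> real" where
  "eps_V r \<gamma> s0 \<zeta> \<mu>h \<mu> Tstar G T \<pi> =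
     (INF g\<in>G. \<bar>measure_pmf.expectation (sa_marg \<mu>)
        (\<lambda>(s, a). w_pol \<gamma> s0 \<zeta> \<mu>h \<pi> T (s, a) *
           (measure_pmf.expectation (T s a) (\<lambda>s'. g s' - Vfun r \<gamma> Tstar \<pi> s')
            - measure_pmf.expectation (Tstar s a) (\<lambda>s'. g s' - Vfun r \<gamma> Tstar \<pi> s')))\<bar>)"

definition eps_rho :: "real \<Rightarrow> 's \<Rightarrow> ('s,'a) kernel \<Rightarrow> ('s,'a) kernel set \<Rightarrow> ('s,'a) policy \<Rightarrow> real" where
  "eps_rho \<gamma> s0 Tstar TT \<pi> =
     (INF T\<in>TT. occ_exp (occ \<gamma> s0 Tstar \<pi>) (\<lambda>(s, a). TV (T s a) (Tstar s a)))"

definition eps_mu :: "real \<Rightarrow> 's \<Rightarrow> real \<Rightarrow> ('s \<times> 'a) pmf \<Rightarrow> ('s,'a) kernel \<Rightarrow> ('s,'a) policy \<Rightarrow> real" where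
  "eps_mu \<gamma> s0 \<zeta> \<mu>h Tstar \<pi> =
     occ_exp (occ \<gamma> s0 Tstar \<pi>)
       (\<lambda>x. if ratio_exceeds (\<zeta> / 2) (occ \<gamma> s0 Tstar \<pi>) \<mu>h x then 1 else 0)"

primrec iid :: "nat \<Rightarrow> 'x pmf \<Rightarrow> 'x list pmf" where
  "iid 0 p = return_pmf []"
| "iid (Suc n) p = bind_pmf p (\<lambda>x. map_pmf (\<lambda>xs. x # xs) (iid n p))"

end

(*
  The simulation lemma writes eta(T, pi) - eta(T*, pi) as gamma/(1 - gamma) times the expected
  one-step model gap E_T V - E_T* V of V = V^pi_T* along the occupancy rho^pi_T.  Splitting this
  expectation with the truncated ratio w = rho^pi_T / muhat bounds it by the population loss of
  any g in G (up to eps_V and a TV(muhat, mu) term) plus Vmax times the truncated mass, so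
  lb(T, pi) is, up to these errors, a lower bound on eta(T*, pi).  Conversely, for the model
  T in TT closest to T* along rho^pi_T*, both the loss and the truncated mass are small, since
  changing the kernel moves the occupancy by at most gamma/(1 - gamma) times the expected
  one-step TV distance; this produces the eps_rho and eps_mu terms.  Bernstein's inequality and
  a union bound over G x TT x PP make all empirical losses uniformly close to their means with
  probability 1 - delta, and on that event the maximality of the returned pair chains the two
  bounds.
*)
theory Submission
  imports Defs
begin

section \<open>Expectations under probability mass functions\<close>

lemma pmf_summable_on: "pmf p summable_on A"
proof -
  have "Infinite_Set_Sum.abs_summable_on (pmf p) A" by (rule pmf_abs_summable)
  hence "Infinite_Sum.abs_summable_on (pmf p) A" using abs_summable_equivalent by blast
  thus ?thesis using summable_on_iff_abs_summable_on_real by blast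
qed

lemma summable_on_pmf_times_bounded:
  fixes f :: "'a \<Rightarrow> real"
  assumes "\<And>x. \<bar>f x\<bar> \<le> B"
  shows "(\<lambda>x. pmf p x * f x) summable_on A"
proof -
  have "(\<lambda>x. norm (pmf p x * f x)) summable_on A"
  proof (rule summable_on_comparison_test[OF summable_on_cmult_left[OF pmf_summable_on]])
    fix x
    have "\<bar>pmf p x * f x\<bar> = pmf p x * \<bar>f x\<bar>" by (simp add: abs_mult)
    also have "\<dots> \<le> pmf p x * B" by (rule mult_left_mono[OF assms]) simp
    finally show "norm (pmf p x * f x) \<le> pmf p x * B" by simp
  qed simp
  thus ?thesis by (rule summable_on_iff_abs_summable_on_real[THEN iffD2])
qed

lemma expectation_eq_infsum_pmf:
  fixes f :: "'a \<Rightarrow> real"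
  assumes "\<And>x. \<bar>f x\<bar> \<le> B"
  shows "measure_pmf.expectation p f = (\<Sum>\<^sub>\<infinity>x. pmf p x * f x)"
proof -
  have "Infinite_Sum.abs_summable_on (\<lambda>x. pmf p x * f x) UNIV"
    by (rule summable_on_iff_abs_summable_on_real[THEN iffD1, OF summable_on_pmf_times_bounded[OF assms]])
  hence "Infinite_Set_Sum.abs_summable_on (\<lambda>x. pmf p x * f x) UNIV"
    by (rule abs_summable_equivalent[THEN iffD1])
  thus ?thesis by (simp add: pmf_expectation_eq_infsetsum infsetsum_infsum)
qed

lemma infsum_pmf_eq_1: "(\<Sum>\<^sub>\<infinity>x. pmf p x) = 1"
  using expectation_eq_infsum_pmf[of "\<lambda>_. 1" 1 p] by simp

lemma integrable_pmf_bounded: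
  fixes f :: "'a \<Rightarrow> real"
  assumes "\<And>x. \<bar>f x\<bar> \<le> B"
  shows "integrable (measure_pmf p) f"
  using assms by (auto intro!: measure_pmf.integrable_const_bound[where B=B])

lemma abs_expectation_le:
  fixes f :: "'a \<Rightarrow> real"
  assumes "\<And>x. \<bar>f x\<bar> \<le> B"
  shows "\<bar>measure_pmf.expectation p f\<bar> \<le> B"
proof -
  have "\<bar>measure_pmf.expectation p f\<bar> \<le> measure_pmf.expectation p (\<lambda>x. \<bar>f x\<bar>)"
    by (rule integral_abs_bound)
  also have "\<dots> \<le> measure_pmf.expectation p (\<lambda>x. B)"
    using assms by (intro integral_mono) (auto intro!: integrable_pmf_bounded[where B=B])
  finally show ?thesis by simp
qed

lemma expectation_mono_bounded:
  fixes f g :: "'a \<Rightarrow> real"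
  assumes "\<And>x. \<bar>f x\<bar> \<le> B" "\<And>x. \<bar>g x\<bar> \<le> B'" "\<And>x. f x \<le> g x"
  shows "measure_pmf.expectation p f \<le> measure_pmf.expectation p g"
  using assms by (intro integral_mono integrable_pmf_bounded) auto

lemma expectation_ge_const:
  fixes f :: "'a \<Rightarrow> real"
  assumes "\<And>x. c \<le> f x" "\<And>x. \<bar>f x\<bar> \<le> B"
  shows "c \<le> measure_pmf.expectation p f"
  using expectation_mono_bounded[of "\<lambda>_. c" "\<bar>c\<bar>" f B p] assms by simp

lemma expectation_le_const:
  fixes f :: "'a \<Rightarrow> real"
  assumes "\<And>x. f x \<le> c" "\<And>x. \<bar>f x\<bar> \<le> B"
  shows "measure_pmf.expectation p f \<le> c"
  using expectation_mono_bounded[of f B "\<lambda>_. c" "\<bar>c\<bar>" p] assms by simp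

lemma expectation_bind_pmf:
  fixes f :: "'b \<Rightarrow> real"
  assumes "\<And>y. \<bar>f y\<bar> \<le> B"
  shows "measure_pmf.expectation (bind_pmf M N) f
       = measure_pmf.expectation M (\<lambda>x. measure_pmf.expectation (N x) f)"
  unfolding measure_pmf_bind
  by (rule integral_bind[where K="count_space UNIV" and B=B and B'=1])
     (use assms measurable_measure_pmf[of N] in
      \<open>auto simp: measure_pmf.emeasure_space_1 intro!: measure_pmf.finite_measure\<close>)

lemma expectation_discounted_suminf:
  fixes F :: "nat \<Rightarrow> 'a \<Rightarrow> real"
  assumes "0 \<le> \<gamma>" "\<gamma> < 1" "\<And>t x. \<bar>F t x\<bar> \<le> B"
  shows "measure_pmf.expectation p (\<lambda>x. \<Sum>t. \<gamma>^t * F t x)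
       = (\<Sum>t. \<gamma>^t * measure_pmf.expectation p (F t))"
proof -
  have geometric: "summable (\<lambda>t. \<gamma>^t * B)"
    using assms by (intro summable_mult2 summable_geometric) auto
  have bound: "\<bar>\<gamma>^t * F t x\<bar> \<le> \<gamma>^t * B" for t x
    using assms by (auto simp: abs_mult intro!: mult_left_mono)
  have "(\<integral>x. (\<Sum>t. \<gamma>^t * F t x) \<partial>p) = (\<Sum>t. integral\<^sup>L p (\<lambda>x. \<gamma>^t * F t x))"
  proof (rule integral_suminf)
    show "integrable (measure_pmf p) (\<lambda>x. \<gamma>^t * F t x)" for t
      by (rule integrable_pmf_bounded[OF bound])
    show "AE x in measure_pmf p. summable (\<lambda>t. norm (\<gamma>^t * F t x))"
      by (intro AE_I2 summable_comparison_test'[OF geometric]) (use bound in auto)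
    show "summable (\<lambda>t. \<integral>x. norm (\<gamma>^t * F t x) \<partial>p)"
      by (rule summable_comparison_test'[OF geometric])
         (use abs_expectation_le[of "\<lambda>x. norm (\<gamma>^_ * F _ x)"] bound in force)
  qed
  thus ?thesis by simp
qed

lemma expectation_eq_suminf_nat:
  fixes f :: "nat \<Rightarrow> real"
  assumes "\<And>t. \<bar>f t\<bar> \<le> B"
  shows "measure_pmf.expectation p f = (\<Sum>t. pmf p t * f t)"
proof -
  have "(\<lambda>t. pmf p t * f t) sums (\<Sum>\<^sub>\<infinity>t. pmf p t * f t)"
    by (rule has_sum_imp_sums[OF has_sum_infsum[OF summable_on_pmf_times_bounded[OF assms]]])
  thus ?thesis by (simp add: expectation_eq_infsum_pmf[OF assms] sums_unique)
qed

lemma infsum_diff: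
  fixes f g :: "'a \<Rightarrow> real"
  assumes "f summable_on A" "g summable_on A"
  shows "infsum (\<lambda>x. f x - g x) A = infsum f A - infsum g A"
  using infsum_add[OF assms(1) summable_on_uminus[THEN iffD2, OF assms(2)]]
  by (simp add: infsum_uminus)

lemma summable_on_abs_pmf_diff: "(\<lambda>x. \<bar>pmf p x - pmf q x\<bar>) summable_on A"
  by (rule summable_on_comparison_test[OF summable_on_add[OF pmf_summable_on[of p] pmf_summable_on[of q]]])
     (auto simp: abs_le_iff)

lemma TV_nonneg: "0 \<le> TV p q"
  unfolding TV_def by (rule infsum_nonneg) auto

lemma TV_commute: "TV p q = TV q p"
  unfolding TV_def by (simp add: abs_minus_commute)

lemma TV_le_2: "TV p q \<le> 2"
proof -
  have "TV p q \<le> (\<Sum>\<^sub>\<infinity>x. pmf p x + pmf q x)"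
    unfolding TV_def
    by (rule infsum_mono[OF summable_on_abs_pmf_diff summable_on_add[OF pmf_summable_on pmf_summable_on]])
       (simp add: abs_le_iff)
  also have "\<dots> = 2"
    by (subst infsum_add[OF pmf_summable_on pmf_summable_on]) (simp add: infsum_pmf_eq_1)
  finally show ?thesis .
qed

lemma abs_expectation_diff_le_TV:
  fixes f :: "'a \<Rightarrow> real"
  assumes "\<And>x. \<bar>f x\<bar> \<le> B"
  shows "\<bar>measure_pmf.expectation p f - measure_pmf.expectation q f\<bar> \<le> B * TV p q"
proof -
  let ?g = "\<lambda>x. (pmf p x - pmf q x) * f x"
  have diff: "measure_pmf.expectation p f - measure_pmf.expectation q f = infsum ?g UNIV"
    unfolding expectation_eq_infsum_pmf[OF assms] left_diff_distrib
    by (rule infsum_diff[symmetric]) (rule summable_on_pmf_times_bounded[OF assms])+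
  have bound: "norm (?g x) \<le> B * \<bar>pmf p x - pmf q x\<bar>" for x
    using mult_left_mono[OF assms[of x] abs_ge_zero[of "pmf p x - pmf q x"]]
    by (simp add: abs_mult mult.commute)
  have dominating: "(\<lambda>x. B * \<bar>pmf p x - pmf q x\<bar>) summable_on UNIV"
    by (rule summable_on_cmult_right[OF summable_on_abs_pmf_diff])
  have summable: "(\<lambda>x. norm (?g x)) summable_on UNIV"
    by (rule summable_on_comparison_test[OF dominating]) (use bound in auto)
  have "\<bar>infsum ?g UNIV\<bar> \<le> infsum (\<lambda>x. norm (?g x)) UNIV"
    using norm_infsum_bound[of ?g UNIV] summable by simp
  also have "\<dots> \<le> infsum (\<lambda>x. B * \<bar>pmf p x - pmf q x\<bar>) UNIV"
    by (rule infsum_mono[OF summable dominating bound])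
  also have "\<dots> = B * TV p q"
    unfolding TV_def by (rule infsum_cmult_right) (use summable_on_abs_pmf_diff in auto)
  finally show ?thesis by (simp add: diff)
qed

text \<open>Centering f at B/2 halves the sup norm, hence the factor 1/2.\<close>
lemma expectation_diff_le_half_TV:
  fixes f :: "'a \<Rightarrow> real"
  assumes "\<And>x. 0 \<le> f x" "\<And>x. f x \<le> B"
  shows "measure_pmf.expectation p f - measure_pmf.expectation q f \<le> B / 2 * TV p q"
proof -
  have centered: "\<bar>f x - B/2\<bar> \<le> B/2" for x using assms[of x] unfolding abs_le_iff by linarith
  have "integrable (measure_pmf p) f" "integrable (measure_pmf q) f"
    using assms by (auto intro!: integrable_pmf_bounded[where B=B] simp: abs_le_iff)
  hence "\<bar>measure_pmf.expectation p f - measure_pmf.expectation q f\<bar> \<le> B / 2 * TV p q"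
    using abs_expectation_diff_le_TV[where f="\<lambda>x. f x - B/2" and B="B/2" and p=p and q=q] centered
    by simp
  thus ?thesis by linarith
qed

lemma abs_expectation_diff_le:
  fixes f :: "'a \<Rightarrow> real"
  assumes "\<And>x. 0 \<le> f x" "\<And>x. f x \<le> B"
  shows "\<bar>measure_pmf.expectation p f - measure_pmf.expectation q f\<bar> \<le> B"
proof -
  have bound: "\<bar>f x\<bar> \<le> B" for x using assms[of x] by auto
  have "0 \<le> measure_pmf.expectation p f" "measure_pmf.expectation p f \<le> B"
       "0 \<le> measure_pmf.expectation q f" "measure_pmf.expectation q f \<le> B"
    by (rule expectation_ge_const[OF assms(1) bound] expectation_le_const[OF assms(2) bound])+
  thus ?thesis by linarith
qed

lemma pmf_eq_bind_sa_marg: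
  fixes \<mu> :: "('s \<times> 'a \<times> 's) pmf" and K :: "('s, 'a) kernel"
  assumes factorization: "\<forall>s a s'. pmf \<mu> (s, a, s') = pmf (sa_marg \<mu>) (s, a) * pmf (K s a) s'"
  shows "\<mu> = bind_pmf (sa_marg \<mu>) (\<lambda>(s, a). map_pmf (\<lambda>s'. (s, a, s')) (K s a))"
proof (rule pmf_eqI)
  fix z :: "'s \<times> 'a \<times> 's"
  obtain s a s' where z: "z = (s, a, s')" by (cases z)
  have component: "pmf ((\<lambda>(s1, a1). map_pmf (\<lambda>s'. (s1, a1, s')) (K s1 a1)) y) (s, a, s')
      = indicator {(s, a)} y * pmf (K s a) s'" for y
  proof (cases "y = (s, a)")
    case True
    have "inj (\<lambda>s'. (s, a, s'))" by (auto intro: injI)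
    from pmf_map_inj'[OF this, of "K s a" s'] show ?thesis using True by simp
  next
    case False
    hence "(s, a, s') \<notin> set_pmf ((\<lambda>(s1, a1). map_pmf (\<lambda>s'. (s1, a1, s')) (K s1 a1)) y)"
      by (cases y) auto
    thus ?thesis using False by (simp add: pmf_eq_0_set_pmf)
  qed
  show "pmf \<mu> z = pmf (bind_pmf (sa_marg \<mu>) (\<lambda>(s, a). map_pmf (\<lambda>s'. (s, a, s')) (K s a))) z"
    unfolding z pmf_bind component using factorization by (simp add: measure_pmf_single)
qed

lemma finite_INF_attained:
  fixes f :: "'x \<Rightarrow> real"
  assumes "finite A" "A \<noteq> {}"
  shows "\<exists>x\<in>A. f x = (INF x\<in>A. f x)"
proof -
  have "(INF x\<in>A. f x) = Min (f ` A)" using assms by (simp add: cInf_eq_Min)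
  moreover have "Min (f ` A) \<in> f ` A" using assms by (intro Min_in) auto
  ultimately show ?thesis by auto
qed

lemma unit_mult_le:
  fixes c x y :: real
  assumes "0 \<le> c" "c \<le> 1" "x \<le> y" "0 \<le> y"
  shows "c * x \<le> y"
proof (cases "0 \<le> x")
  case True
  hence "c * x \<le> 1 * x" using assms by (intro mult_right_mono) auto
  thus ?thesis using assms by simp
next
  case False
  hence "c * x \<le> 0" using assms by (simp add: mult_nonneg_nonpos)
  thus ?thesis using assms by simp
qed

section \<open>Truncated density ratios\<close>

lemma wtr_nonneg: "0 \<le> wtr \<zeta> (pmf \<rho>) \<mu>h x"
  by (auto simp: wtr_def)

lemma wtr_le: "0 \<le> \<zeta> \<Longrightarrow> wtr \<zeta> (pmf \<rho>) \<mu>h x \<le> \<zeta>"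
  by (auto simp: wtr_def ratio_exceeds_def)

lemma abs_wtr_le: "0 \<le> \<zeta> \<Longrightarrow> \<bar>wtr \<zeta> (pmf \<rho>) \<mu>h x\<bar> \<le> \<zeta>"
  using wtr_nonneg wtr_le by (metis abs_of_nonneg)

lemma pmf_eq_wtr_plus_excess:
  "pmf \<rho> x = pmf \<mu>h x * wtr \<zeta> (pmf \<rho>) \<mu>h x
     + (if ratio_exceeds \<zeta> (pmf \<rho>) \<mu>h x then pmf \<rho> x else 0)"
proof (cases "ratio_exceeds \<zeta> (pmf \<rho>) \<mu>h x \<or> pmf \<mu>h x \<noteq> 0")
  case False
  hence "pmf \<mu>h x = 0" "\<not> 0 < pmf \<rho> x" by (auto simp: ratio_exceeds_def)
  hence "pmf \<rho> x = 0" using pmf_nonneg[of \<rho> x] by linarith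
  thus ?thesis using False by (simp add: wtr_def)
qed (auto simp: wtr_def)

lemma expectation_wtr_split:
  fixes h :: "'x \<Rightarrow> real"
  assumes "0 \<le> \<zeta>" "\<And>x. \<bar>h x\<bar> \<le> B"
  shows "measure_pmf.expectation \<rho> h = measure_pmf.expectation \<mu>h (\<lambda>x. wtr \<zeta> (pmf \<rho>) \<mu>h x * h x)
     + measure_pmf.expectation \<rho> (\<lambda>x. (if ratio_exceeds \<zeta> (pmf \<rho>) \<mu>h x then 1 else 0) * h x)"
proof -
  let ?w = "wtr \<zeta> (pmf \<rho>) \<mu>h"
  let ?e = "\<lambda>x. (if ratio_exceeds \<zeta> (pmf \<rho>) \<mu>h x then 1 else 0) * h x"
  have weighted_bound: "\<bar>?w x * h x\<bar> \<le> \<zeta> * B" for x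
    unfolding abs_mult by (rule mult_mono[OF abs_wtr_le[OF assms(1)] assms(2)]) (use assms(1) in auto)
  have excess_bound: "\<bar>?e x\<bar> \<le> B" for x using assms(2)[of x] by auto
  have "measure_pmf.expectation \<rho> h = (\<Sum>\<^sub>\<infinity>x. pmf \<rho> x * h x)"
    by (rule expectation_eq_infsum_pmf[OF assms(2)])
  also have "\<dots> = (\<Sum>\<^sub>\<infinity>x. pmf \<mu>h x * (?w x * h x) + pmf \<rho> x * ?e x)"
    by (rule infsum_cong, subst pmf_eq_wtr_plus_excess[of \<rho> _ \<mu>h \<zeta>]) (auto simp: algebra_simps)
  also have "\<dots> = (\<Sum>\<^sub>\<infinity>x. pmf \<mu>h x * (?w x * h x)) + (\<Sum>\<^sub>\<infinity>x. pmf \<rho> x * ?e x)"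
    by (rule infsum_add[OF summable_on_pmf_times_bounded[OF weighted_bound]
                           summable_on_pmf_times_bounded[OF excess_bound]])
  also have "\<dots> = measure_pmf.expectation \<mu>h (\<lambda>x. ?w x * h x) + measure_pmf.expectation \<rho> ?e"
    by (simp add: expectation_eq_infsum_pmf[OF weighted_bound] expectation_eq_infsum_pmf[OF excess_bound])
  finally show ?thesis .
qed

lemma expectation_wtr_le:
  fixes h :: "'x \<Rightarrow> real"
  assumes "0 \<le> \<zeta>" "\<And>x. \<bar>h x\<bar> \<le> B" "\<And>x. 0 \<le> h x"
  shows "measure_pmf.expectation \<mu>h (\<lambda>x. wtr \<zeta> (pmf \<rho>) \<mu>h x * h x) \<le> measure_pmf.expectation \<rho> h"
proof -
  have "0 \<le> measure_pmf.expectation \<rho> (\<lambda>x. (if ratio_exceeds \<zeta> (pmf \<rho>) \<mu>h x then 1 else 0) * h x)"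
    by (rule integral_nonneg_AE) (use assms(3) in auto)
  thus ?thesis using expectation_wtr_split[where h=h and B=B and \<rho>=\<rho> and \<mu>h=\<mu>h, OF assms(1,2)] by linarith
qed

text \<open>On this event \<rho>' \<le> \<zeta>/2 \<mu>h < \<rho>/2 pointwise.\<close>
lemma expectation_ratio_gap_le_half:
  fixes \<rho> \<rho>' :: "'x pmf" and \<mu>h :: "'x pmf" and \<zeta> :: real
  defines "A \<equiv> \<lambda>x. if ratio_exceeds \<zeta> (pmf \<rho>) \<mu>h x \<and> \<not> ratio_exceeds (\<zeta> / 2) (pmf \<rho>') \<mu>h x
                    then 1 else (0::real)"
  shows "measure_pmf.expectation \<rho>' A \<le> measure_pmf.expectation \<rho> A / 2"
proof -
  have A_bound: "\<bar>A x\<bar> \<le> 1" "\<bar>A x / 2\<bar> \<le> 1" for x by (simp_all add: A_def)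
  have pointwise: "pmf \<rho>' x * A x \<le> pmf \<rho> x * (A x / 2)" for x
  proof (cases "ratio_exceeds \<zeta> (pmf \<rho>) \<mu>h x \<and> \<not> ratio_exceeds (\<zeta> / 2) (pmf \<rho>') \<mu>h x")
    case True
    hence "pmf \<rho>' x \<le> pmf \<rho> x / 2"
      using pmf_nonneg[of \<rho>' x] pmf_nonneg[of \<mu>h x]
      by (auto simp: ratio_exceeds_def pos_less_divide_eq pos_divide_le_eq split: if_splits)
    thus ?thesis using True by (simp add: A_def)
  qed (auto simp: A_def)
  have "measure_pmf.expectation \<rho>' A = (\<Sum>\<^sub>\<infinity>x. pmf \<rho>' x * A x)"
    by (rule expectation_eq_infsum_pmf[OF A_bound(1)])
  also have "\<dots> \<le> (\<Sum>\<^sub>\<infinity>x. pmf \<rho> x * (A x / 2))"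
    by (rule infsum_mono[OF summable_on_pmf_times_bounded[OF A_bound(1)]
                            summable_on_pmf_times_bounded[OF A_bound(2)] pointwise])
  also have "\<dots> = measure_pmf.expectation \<rho> (\<lambda>x. A x / 2)"
    by (rule expectation_eq_infsum_pmf[OF A_bound(2), symmetric])
  also have "\<dots> = measure_pmf.expectation \<rho> A / 2" by simp
  finally show ?thesis .
qed

section \<open>Bernstein's inequality for i.i.d. samples\<close>

lemma exp_le_quadratic_of_nonpos:
  fixes u :: real assumes "u \<le> 0" shows "exp u \<le> 1 + u + u^2 / 2"
proof -
  let ?f = "\<lambda>x::real. 1 + x + x^2 / 2 - exp x"
  have "?f 0 \<le> ?f u"
  proof (rule DERIV_nonpos_imp_nonincreasing[OF assms])
    fix x :: real assume "u \<le> x" "x \<le> 0"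
    have "DERIV ?f x :> 1 + x - exp x"
      by (auto intro!: derivative_eq_intros simp: power2_eq_square algebra_simps)
    moreover have "1 + x - exp x \<le> 0" using exp_ge_add_one_self[of x] by linarith
    ultimately show "\<exists>y. DERIV ?f x :> y \<and> y \<le> 0" by blast
  qed
  thus ?thesis by simp
qed

lemma two_times_power_three_le_fact: "2 * 3 ^ n \<le> (fact (n + 2) :: real)"
proof (induction n)
  case 0 show ?case by simp
next
  case (Suc n)
  have "(fact (Suc n + 2) :: real) = real (n + 3) * fact (n + 2)"
    by (simp add: algebra_simps)
  also have "\<dots> \<ge> 3 * (2 * 3 ^ n)"
    using Suc by (intro mult_mono) auto
  finally show ?case by simp
qed

lemma exp_le_bernstein_of_nonneg:
  fixes u :: real assumes "0 \<le> u" "u < 3"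
  shows "exp u \<le> 1 + u + u^2 / (2 * (1 - u / 3))"
proof -
  let ?a = "\<lambda>n. inverse (fact (n + 2)) *\<^sub>R (u ^ (n + 2))"
  let ?b = "\<lambda>n. u^2 / 2 * (u / 3) ^ n"
  have ratio_lt_1: "norm (u / 3) < 1" using assms by simp
  have summable_b: "summable ?b" by (rule summable_mult[OF summable_geometric[OF ratio_lt_1]])
  have a_le_b: "?a n \<le> ?b n" for n
  proof -
    have "?a n = u^2 * u^n / fact (n + 2)" by (simp add: power_add field_simps power2_eq_square)
    also have "\<dots> \<le> u^2 * u^n / (2 * 3^n)"
      by (rule divide_left_mono[OF two_times_power_three_le_fact]) (use assms in auto)
    also have "\<dots> = ?b n" by (simp add: power_divide)
    finally show ?thesis .
  qed
  have a_nonneg: "0 \<le> ?a n" for n using assms by simp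
  have summable_a: "summable ?a"
    by (rule summable_comparison_test'[OF summable_b]) (use a_le_b a_nonneg in auto)
  have "exp u = 1 + u + (\<Sum>n. ?a n)" by (rule exp_first_two_terms)
  also have "(\<Sum>n. ?a n) \<le> (\<Sum>n. ?b n)" by (rule suminf_le[OF a_le_b summable_a summable_b])
  also have "(\<Sum>n. ?b n) = u^2 / 2 * (1 / (1 - u / 3))"
    using suminf_mult[OF summable_geometric[OF ratio_lt_1], of "u^2/2"] suminf_geometric[OF ratio_lt_1] by simp
  also have "\<dots> = u^2 / (2 * (1 - u / 3))" by simp
  finally show ?thesis by simp
qed

lemma exp_le_bernstein:
  fixes u c :: real assumes "0 \<le> c" "c < 3" "u \<le> c"
  shows "exp u \<le> 1 + u + u^2 / (2 * (1 - c / 3))"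
proof -
  have d: "0 < 1 - c / 3" "1 - c / 3 \<le> 1" using assms by auto
  show ?thesis
  proof (cases "u \<le> 0")
    case True
    have "u^2 / 2 \<le> u^2 / (2 * (1 - c / 3))"
      using d by (intro divide_left_mono) auto
    thus ?thesis using exp_le_quadratic_of_nonpos[OF True] by linarith
  next
    case False
    have d2: "0 < 1 - u / 3" "1 - c / 3 \<le> 1 - u / 3" using assms False by auto
    have "u^2 / (2 * (1 - u / 3)) \<le> u^2 / (2 * (1 - c / 3))"
      using d d2 by (intro divide_left_mono mult_pos_pos) auto
    thus ?thesis using exp_le_bernstein_of_nonneg[of u] False assms by linarith
  qed
qed

lemma length_iid: "xs \<in> set_pmf (iid n p) \<Longrightarrow> length xs = n"
  by (induction n arbitrary: xs) auto

lemma expectation_exp_le_bernstein: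
  fixes Y :: "'x \<Rightarrow> real"
  assumes EY: "measure_pmf.expectation p Y = 0" and Yb: "\<And>x. Y x \<le> b"
    and YB: "\<And>x. \<bar>Y x\<bar> \<le> B" and var: "measure_pmf.expectation p (\<lambda>x. (Y x)^2) \<le> \<sigma>2"
    and l: "0 \<le> l" "l * b < 3" "0 \<le> l * b"
  shows "measure_pmf.expectation p (\<lambda>x. exp (l * Y x)) \<le> exp (l^2 * \<sigma>2 / (2 * (1 - l * b / 3)))"
proof -
  let ?k = "2 * (1 - l * b / 3)"
  have k_pos: "0 < ?k" using l by (simp add: mult.commute)
  have pointwise: "exp (l * Y x) \<le> 1 + l * Y x + l^2 / ?k * (Y x)^2" for x
  proof -
    have "l * Y x \<le> l * b" by (rule mult_left_mono[OF Yb l(1)])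
    from exp_le_bernstein[OF l(3) l(2) this] show ?thesis by (simp add: power_mult_distrib)
  qed
  have integrable_Y: "integrable (measure_pmf p) Y" by (rule integrable_pmf_bounded[OF YB])
  have Y2_bound: "\<bar>(Y x)^2\<bar> \<le> B^2" for x using power_mono[OF YB[of x] abs_ge_zero, of 2] by simp
  have integrable_Y2: "integrable (measure_pmf p) (\<lambda>x. (Y x)^2)" by (rule integrable_pmf_bounded[OF Y2_bound])
  have "measure_pmf.expectation p (\<lambda>x. exp (l * Y x))
      \<le> measure_pmf.expectation p (\<lambda>x. 1 + l * Y x + l^2 / ?k * (Y x)^2)"
  proof (rule integral_mono[OF _ _ pointwise])
    show "integrable (measure_pmf p) (\<lambda>x. exp (l * Y x))"
      by (rule integrable_pmf_bounded[where B="exp (l * B)"])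
         (use YB l in \<open>auto intro!: mult_left_mono simp: abs_le_iff\<close>)
    show "integrable (measure_pmf p) (\<lambda>x. 1 + l * Y x + l^2 / ?k * (Y x)^2)"
      using integrable_Y integrable_Y2 by simp
  qed
  also have "\<dots> = 1 + l * measure_pmf.expectation p Y + l^2 / ?k * measure_pmf.expectation p (\<lambda>x. (Y x)^2)"
    using integrable_Y integrable_Y2 by simp
  also have "\<dots> \<le> 1 + l^2 / ?k * \<sigma>2"
  proof -
    have "0 \<le> l^2 / ?k" using k_pos by simp
    hence "l^2 / ?k * measure_pmf.expectation p (\<lambda>x. (Y x)^2) \<le> l^2 / ?k * \<sigma>2"
      by (rule mult_left_mono[OF var])
    thus ?thesis using EY by simp
  qed
  also have "\<dots> \<le> exp (l^2 / ?k * \<sigma>2)" using exp_ge_add_one_self[of "l^2 / ?k * \<sigma>2"] by simp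
  finally show ?thesis by (simp add: field_simps)
qed

lemma nn_integral_exp_sum_list_iid:
  fixes Y :: "'x \<Rightarrow> real"
  shows "(\<integral>\<^sup>+xs. ennreal (exp (l * sum_list (map Y xs))) \<partial>measure_pmf (iid n p))
       = (\<integral>\<^sup>+x. ennreal (exp (l * Y x)) \<partial>measure_pmf p) ^ n"
proof (induction n)
  case 0 show ?case by simp
next
  case (Suc n)
  have inner: "(\<integral>\<^sup>+xs. ennreal (exp (l * sum_list (map Y (x # xs)))) \<partial>measure_pmf (iid n p))
      = ennreal (exp (l * Y x)) * (\<integral>\<^sup>+x. ennreal (exp (l * Y x)) \<partial>measure_pmf p) ^ n" for x
  proof -
    have "(\<integral>\<^sup>+xs. ennreal (exp (l * sum_list (map Y (x # xs)))) \<partial>measure_pmf (iid n p))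
        = (\<integral>\<^sup>+xs. ennreal (exp (l * Y x)) * ennreal (exp (l * sum_list (map Y xs))) \<partial>measure_pmf (iid n p))"
      by (rule nn_integral_cong) (simp add: distrib_left exp_add ennreal_mult)
    also have "\<dots> = ennreal (exp (l * Y x)) * (\<integral>\<^sup>+xs. ennreal (exp (l * sum_list (map Y xs))) \<partial>measure_pmf (iid n p))"
      by (rule nn_integral_cmult) simp
    finally show ?thesis using Suc by simp
  qed
  have "(\<integral>\<^sup>+xs. ennreal (exp (l * sum_list (map Y xs))) \<partial>measure_pmf (iid (Suc n) p))
      = (\<integral>\<^sup>+x. (\<integral>\<^sup>+xs. ennreal (exp (l * sum_list (map Y (x # xs)))) \<partial>measure_pmf (iid n p)) \<partial>measure_pmf p)"
    by simp
  also have "\<dots> = (\<integral>\<^sup>+x. ennreal (exp (l * Y x)) * (\<integral>\<^sup>+x. ennreal (exp (l * Y x)) \<partial>measure_pmf p) ^ n \<partial>measure_pmf p)"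
    by (simp only: inner)
  also have "\<dots> = (\<integral>\<^sup>+x. ennreal (exp (l * Y x)) \<partial>measure_pmf p) * (\<integral>\<^sup>+x. ennreal (exp (l * Y x)) \<partial>measure_pmf p) ^ n"
    by (rule nn_integral_multc) simp
  finally show ?case by (simp add: mult.commute)
qed

lemma indicator_le_exp_scaled:
  fixes l a :: real
  assumes "0 \<le> l"
  shows "indicator {x. a \<le> f x} x \<le> ennreal (exp (- l * a)) * ennreal (exp (l * f x))"
proof (cases "a \<le> f x")
  case True
  hence "0 \<le> l * (f x - a)" using assms by simp
  hence "1 \<le> exp (- l * a) * exp (l * f x)"
    by (simp add: exp_add[symmetric] algebra_simps)
  thus ?thesis using True by (simp add: ennreal_mult[symmetric] ennreal_1[symmetric] ennreal_leI del: ennreal_1)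
qed simp

lemma prob_sum_list_ge_iid_le:
  fixes Y :: "'x \<Rightarrow> real"
  assumes YB: "\<And>x. \<bar>Y x\<bar> \<le> B" and l: "0 \<le> l"
    and M: "measure_pmf.expectation p (\<lambda>x. exp (l * Y x)) \<le> M"
  shows "measure_pmf.prob (iid n p) {xs. a \<le> sum_list (map Y xs)} \<le> exp (- l * a) * M ^ n"
proof -
  let ?A = "{xs. a \<le> sum_list (map Y xs)}"
  let ?E = "measure_pmf.expectation p (\<lambda>x. exp (l * Y x))"
  have integrable_exp: "integrable (measure_pmf p) (\<lambda>x. exp (l * Y x))"
    by (rule integrable_pmf_bounded[where B="exp (l * B)"])
       (use YB l in \<open>auto intro!: mult_left_mono simp: abs_le_iff\<close>)
  have E_nonneg: "0 \<le> ?E" by (rule integral_nonneg_AE) simp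
  have nn_integral_eq: "(\<integral>\<^sup>+x. ennreal (exp (l * Y x)) \<partial>measure_pmf p) = ennreal ?E"
    by (rule nn_integral_eq_integral[OF integrable_exp]) simp
  have "emeasure (measure_pmf (iid n p)) ?A = (\<integral>\<^sup>+xs. indicator ?A xs \<partial>measure_pmf (iid n p))"
    by simp
  also have "\<dots> \<le> (\<integral>\<^sup>+xs. ennreal (exp (- l * a)) * ennreal (exp (l * sum_list (map Y xs))) \<partial>measure_pmf (iid n p))"
    by (intro nn_integral_mono indicator_le_exp_scaled[OF l])
  also have "\<dots> = ennreal (exp (- l * a)) * (\<integral>\<^sup>+xs. ennreal (exp (l * sum_list (map Y xs))) \<partial>measure_pmf (iid n p))"
    by (rule nn_integral_cmult) simp
  also have "\<dots> = ennreal (exp (- l * a)) * ennreal ?E ^ n" by (simp add: nn_integral_exp_sum_list_iid nn_integral_eq)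
  also have "\<dots> = ennreal (exp (- l * a) * ?E ^ n)" using E_nonneg by (simp add: ennreal_mult ennreal_power)
  also have "\<dots> \<le> ennreal (exp (- l * a) * M ^ n)"
    using E_nonneg M by (intro ennreal_leI mult_left_mono power_mono) auto
  finally have "ennreal (measure_pmf.prob (iid n p) ?A) \<le> ennreal (exp (- l * a) * M ^ n)"
    by (simp add: measure_pmf.emeasure_eq_measure)
  moreover have "0 \<le> exp (- l * a) * M ^ n"
  proof -
    have "0 \<le> M" using E_nonneg M by linarith
    thus ?thesis by simp
  qed
  ultimately show ?thesis by simp
qed

lemma bernstein_iid:
  fixes Y :: "'x \<Rightarrow> real"
  assumes EY: "measure_pmf.expectation p Y = 0" and Yb: "\<And>x. Y x \<le> b"
    and YB: "\<And>x. \<bar>Y x\<bar> \<le> B" and var: "measure_pmf.expectation p (\<lambda>x. (Y x)^2) \<le> \<sigma>2"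
    and s: "0 < \<sigma>2" and b: "0 < b" and t: "0 \<le> t"
  shows "measure_pmf.prob (iid n p) {xs. real n * t \<le> sum_list (map Y xs)}
     \<le> exp (- (real n * t^2 / (2 * (\<sigma>2 + b * t / 3))))"
proof -
  define D where "D = \<sigma>2 + b * t / 3"
  have D: "0 < D" using s b t by (simp add: D_def add_pos_nonneg)
  define l where "l = t / D"
  have l0: "0 \<le> l" using t D by (simp add: l_def)
  have lb0: "0 \<le> l * b" using l0 b by simp
  have lb3: "l * b < 3"
  proof -
    have "l * b = b * t / D" by (simp add: l_def)
    also have "\<dots> < 3" using D s unfolding D_def by (simp add: divide_less_eq)
    finally show ?thesis .
  qed
  have mgf: "measure_pmf.expectation p (\<lambda>x. exp (l * Y x)) \<le> exp (l^2 * \<sigma>2 / (2 * (1 - l * b / 3)))"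
    by (rule expectation_exp_le_bernstein[OF EY Yb YB var l0 lb3 lb0])
  have "measure_pmf.prob (iid n p) {xs. real n * t \<le> sum_list (map Y xs)}
      \<le> exp (- l * (real n * t)) * exp (l^2 * \<sigma>2 / (2 * (1 - l * b / 3))) ^ n"
    by (rule prob_sum_list_ge_iid_le[OF YB l0 mgf])
  also have "\<dots> = exp (real n * (l^2 * \<sigma>2 / (2 * (1 - l * b / 3)) - l * t))"
    by (simp add: exp_of_nat_mult[symmetric] exp_add[symmetric] algebra_simps)
  also have "l^2 * \<sigma>2 / (2 * (1 - l * b / 3)) - l * t = - (t^2 / (2 * D))"
  proof -
    have "1 - l * b / 3 = \<sigma>2 / D" using D by (simp add: l_def D_def field_simps)
    hence "l^2 * \<sigma>2 / (2 * (1 - l * b / 3)) = l^2 * \<sigma>2 / (2 * (\<sigma>2 / D))" by simp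
    also have "\<dots> = l^2 * D / 2" using D s by (simp add: field_simps)
    also have "\<dots> = t^2 / (2 * D)" using D by (simp add: l_def power2_eq_square field_simps)
    finally have "l^2 * \<sigma>2 / (2 * (1 - l * b / 3)) = t^2 / (2 * D)" .
    moreover have "l * t = t^2 / D" by (simp add: l_def power2_eq_square)
    ultimately show ?thesis by simp
  qed
  finally show ?thesis by (simp add: D_def)
qed

lemma bernstein_exponent_ge:
  fixes \<sigma>2 b \<iota> :: real and n :: nat
  assumes "0 < \<sigma>2" "0 < b" "0 \<le> \<iota>" "0 < n"
  defines "dev \<equiv> sqrt (2 * \<sigma>2 * \<iota> / n) + 2 * b * \<iota> / (3 * n)"
  shows "\<iota> \<le> real n * dev^2 / (2 * (\<sigma>2 + b * dev / 3))"
proof -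
  define A where "A = 2 * \<sigma>2 * \<iota> / n"
  define Bq where "Bq = 2 * b * \<iota> / (3 * n)"
  have A0: "0 \<le> A" and B0: "0 \<le> Bq" using assms by (auto simp: A_def Bq_def)
  have dv: "dev = sqrt A + Bq" by (simp add: dev_def A_def Bq_def)
  have d0: "0 \<le> dev" using A0 B0 dv by simp
  have "dev^2 = A + 2 * Bq * sqrt A + Bq^2" using A0 by (simp add: dv power2_eq_square algebra_simps)
  also have "\<dots> \<ge> A + Bq * dev" using A0 B0 by (simp add: dv power2_eq_square algebra_simps)
  finally have "A + Bq * dev \<le> dev^2" .
  hence "real n * (A + Bq * dev) \<le> real n * dev^2" by (rule mult_left_mono) simp
  moreover have "real n * (A + Bq * dev) = 2 * \<iota> * (\<sigma>2 + b * dev / 3)"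
    using assms by (simp add: A_def Bq_def field_simps)
  ultimately have "\<iota> * (2 * (\<sigma>2 + b * dev / 3)) \<le> real n * dev^2" by (simp add: mult_ac)
  moreover have "0 < 2 * (\<sigma>2 + b * dev / 3)" using assms d0 by (simp add: add_pos_nonneg)
  ultimately show ?thesis by (simp add: pos_le_divide_eq)
qed

lemma sum_list_map_minus_const: "sum_list (map (\<lambda>z. f z - c) xs) = sum_list (map f xs) - real (length xs) * (c::real)"
  by (induction xs) (auto simp: algebra_simps)

lemma bernstein_deviation_le:
  fixes Vm \<zeta> \<iota> u :: real and n :: nat
  assumes Vm: "0 \<le> Vm" and z: "0 < \<zeta>" and i: "0 \<le> \<iota>" and n: "0 < n" and u: "0 \<le> u"
    and xs: "sqrt (\<zeta> * \<iota> / n) \<le> 1/4"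
  shows "2 * (sqrt (2 * (\<zeta> * Vm^2 * (1 + u / 2)) * \<iota> / n) + 2 * (2 * \<zeta> * Vm) * \<iota> / (3 * n))
     \<le> 4 * Vm * sqrt (\<zeta> * \<iota> / n) + Vm * u / 2"
proof -
  define y where "y = \<zeta> * \<iota> / n"
  define x where "x = sqrt y"
  have y0: "0 \<le> y" unfolding y_def using z i n by (intro divide_nonneg_nonneg mult_nonneg_nonneg) auto
  have x0: "0 \<le> x" using y0 by (simp add: x_def)
  have xx: "x^2 = y" using y0 by (simp add: x_def)
  have x4: "x \<le> 1/4" using xs by (simp add: x_def y_def)
  have e1: "2 * (\<zeta> * Vm^2 * (1 + u / 2)) * \<iota> / n = Vm^2 * y * (2 + u)"
    using n by (simp add: y_def field_simps)
  have s1: "sqrt (Vm^2 * y * (2 + u)) = Vm * x * sqrt (2 + u)"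
    using Vm u by (simp add: real_sqrt_mult x_def)
  have s2: "sqrt (2 + u) \<le> 3/2 + u/3"
  proof -
    have "2 + u \<le> (3/2 + u/3)^2" using u by (simp add: power2_eq_square field_simps)
    hence "sqrt (2 + u) \<le> sqrt ((3/2 + u/3)^2)" by (rule real_sqrt_le_mono)
    thus ?thesis using u by simp
  qed
  have e2: "2 * (2 * \<zeta> * Vm) * \<iota> / (3 * n) = 4/3 * Vm * y" using n by (simp add: y_def field_simps)
  have "2 * (sqrt (2 * (\<zeta> * Vm^2 * (1 + u / 2)) * \<iota> / n) + 2 * (2 * \<zeta> * Vm) * \<iota> / (3 * n))
      = 2 * (Vm * x) * sqrt (2 + u) + 8/3 * Vm * x^2"
    unfolding e1 s1 e2 xx by simp
  also have "\<dots> \<le> 2 * (Vm * x) * (3/2 + u/3) + 8/3 * Vm * x^2"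
    using s2 Vm x0 by (intro add_mono mult_left_mono) auto
  also have "\<dots> \<le> 4 * Vm * x + Vm * u / 2"
  proof -
    have a: "0 \<le> Vm * (x * (1 - 8/3 * x))" using Vm x0 x4 by (intro mult_nonneg_nonneg) auto
    have b: "0 \<le> Vm * (u * (1/2 - 2/3 * x))" using Vm u x4 by (intro mult_nonneg_nonneg) auto
    show ?thesis using a b by (simp add: algebra_simps power2_eq_square)
  qed
  finally show ?thesis by (simp add: x_def y_def)
qed

lemma confidence_level:
  fixes N \<delta> :: real
  assumes "1 \<le> N" "0 < \<delta>" "\<delta> < 1"
  shows "0 < ln (2 * N / \<delta>)" and "2 * N * exp (- ln (2 * N / \<delta>)) = \<delta>"
proof -
  have "1 < 2 * N / \<delta>" using assms by (simp add: field_simps)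
  thus "0 < ln (2 * N / \<delta>)" by simp
  show "2 * N * exp (- ln (2 * N / \<delta>)) = \<delta>"
    using \<open>1 < 2 * N / \<delta>\<close> assms by (simp add: exp_minus field_simps)
qed

section \<open>Discounted Markov decision processes\<close>

lemma sa_dist_Suc_first_step:
  "sa_dist T \<pi> s (Suc t) = bind_pmf (\<pi> s) (\<lambda>a. bind_pmf (T s a) (\<lambda>s'. sa_dist T \<pi> s' t))"
proof (induction t)
  case (Suc t)
  show ?case by (subst sa_dist.simps(2), subst Suc) (simp add: bind_assoc_pmf)
qed (simp add: bind_map_pmf)

definition step_expectation :: "('s,'a) kernel \<Rightarrow> ('s,'a) policy \<Rightarrow> ('s \<times> 'a \<Rightarrow> real) \<Rightarrow> 's \<times> 'a \<Rightarrow> real" where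
  "step_expectation T \<pi> f = (\<lambda>(x, a). measure_pmf.expectation (T x a)
      (\<lambda>x'. measure_pmf.expectation (\<pi> x') (\<lambda>a'. f (x', a'))))"

lemma abs_step_expectation_le: "(\<And>x. \<bar>f x\<bar> \<le> B) \<Longrightarrow> \<bar>step_expectation T \<pi> f y\<bar> \<le> B"
  unfolding step_expectation_def by (cases y) (auto intro!: abs_expectation_le)

lemma step_expectation_unit_interval:
  "(\<And>x. 0 \<le> f x \<and> f x \<le> 1) \<Longrightarrow> 0 \<le> step_expectation T \<pi> f y \<and> step_expectation T \<pi> f y \<le> 1"
  unfolding step_expectation_def
  by (cases y) (auto intro!: expectation_ge_const[where B=1] expectation_le_const[where B=1]
                             abs_expectation_le simp: abs_le_iff)

lemma expectation_sa_dist_Suc: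
  fixes f :: "'s \<times> 'a \<Rightarrow> real"
  assumes "\<And>x. \<bar>f x\<bar> \<le> B"
  shows "measure_pmf.expectation (sa_dist T \<pi> s (Suc t)) f
       = measure_pmf.expectation (sa_dist T \<pi> s t) (step_expectation T \<pi> f)"
  unfolding sa_dist.simps
  by (subst expectation_bind_pmf[OF assms], rule Bochner_Integration.integral_cong)
     (auto simp: step_expectation_def expectation_bind_pmf[OF assms])

lemma step_expectation_diff_le_TV:
  assumes "\<And>x. 0 \<le> f x \<and> f x \<le> 1"
  shows "step_expectation T \<pi> f y - step_expectation T' \<pi> f y \<le> (\<lambda>(x, a). TV (T x a) (T' x a)) y"
proof -
  obtain x a where y: "y = (x, a)" by (cases y)
  have "\<bar>measure_pmf.expectation (\<pi> x') (\<lambda>a'. f (x', a'))\<bar> \<le> 1" for x'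
    by (rule abs_expectation_le) (use assms in \<open>simp add: abs_le_iff\<close>)
  hence "\<bar>step_expectation T \<pi> f y - step_expectation T' \<pi> f y\<bar> \<le> 1 * TV (T x a) (T' x a)"
    unfolding step_expectation_def y by (simp only: prod.case) (rule abs_expectation_diff_le_TV)
  thus ?thesis by (simp add: y)
qed

lemma expectation_step_expectation_diff_le_TV:
  assumes unit: "\<And>x. 0 \<le> f x \<and> f x \<le> 1"
  shows "measure_pmf.expectation p (step_expectation T \<pi> f) - measure_pmf.expectation p (step_expectation T' \<pi> f)
     \<le> measure_pmf.expectation p (\<lambda>(x, a). TV (T x a) (T' x a))"
proof -
  have step_bound: "\<bar>step_expectation S \<pi> f y\<bar> \<le> 1" for S y
    by (rule abs_step_expectation_le) (use unit in \<open>simp add: abs_le_iff\<close>)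
  have "measure_pmf.expectation p (step_expectation T \<pi> f) - measure_pmf.expectation p (step_expectation T' \<pi> f)
      = measure_pmf.expectation p (\<lambda>y. step_expectation T \<pi> f y - step_expectation T' \<pi> f y)"
    using integrable_pmf_bounded[where f="step_expectation T \<pi> f", OF step_bound]
          integrable_pmf_bounded[where f="step_expectation T' \<pi> f", OF step_bound]
    by simp
  also have "\<dots> \<le> measure_pmf.expectation p (\<lambda>(x, a). TV (T x a) (T' x a))"
  proof (rule expectation_mono_bounded[where B=2 and B'=2])
    fix y
    show "\<bar>step_expectation T \<pi> f y - step_expectation T' \<pi> f y\<bar> \<le> 2"
      using step_bound[of T y] step_bound[of T' y] by linarith
    show "\<bar>(\<lambda>(x, a). TV (T x a) (T' x a)) y\<bar> \<le> 2"
      by (cases y) (simp add: TV_nonneg TV_le_2)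
    show "step_expectation T \<pi> f y - step_expectation T' \<pi> f y \<le> (\<lambda>(x, a). TV (T x a) (T' x a)) y"
      by (rule step_expectation_diff_le_TV[where f=f, OF unit])
  qed
  finally show ?thesis .
qed

locale discounted_mdp =
  fixes r :: "'s \<Rightarrow> 'a \<Rightarrow> real" and \<gamma> :: real
  assumes gamma_nonneg: "0 \<le> \<gamma>" and gamma_less_1: "\<gamma> < 1"
    and reward_nonneg: "\<forall>s a. 0 \<le> r s a" and reward_bdd_above: "bdd_above (range (case_prod r))"
begin

lemma reward_le_Rmax: "r s a \<le> Rmax r"
  using cSUP_upper[OF UNIV_I reward_bdd_above, of "(s, a)"] by (simp add: Rmax_def)

lemma Rmax_nonneg: "0 \<le> Rmax r"
  using reward_le_Rmax reward_nonneg by (meson order.trans)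

lemma Vmax_nonneg: "0 \<le> Vmax r \<gamma>"
  using Rmax_nonneg gamma_less_1 by (simp add: Vmax_def)

lemma abs_reward_le: "\<bar>case_prod r x\<bar> \<le> Rmax r"
  using reward_le_Rmax reward_nonneg by (cases x) auto

lemma summable_discounted: "(\<And>t. \<bar>f t\<bar> \<le> B) \<Longrightarrow> summable (\<lambda>t. \<gamma>^t * f t)"
  using gamma_nonneg gamma_less_1
  by (intro summable_comparison_test'[OF summable_mult2[OF summable_geometric, of \<gamma> B]])
     (auto simp: abs_mult intro!: mult_left_mono)

definition expected_reward :: "('s,'a) kernel \<Rightarrow> ('s,'a) policy \<Rightarrow> nat \<Rightarrow> 's \<Rightarrow> real" where
  "expected_reward T \<pi> t s = measure_pmf.expectation (sa_dist T \<pi> s t) (\<lambda>(x, a). r x a)"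

lemma abs_expected_reward_le: "\<bar>expected_reward T \<pi> t s\<bar> \<le> Rmax r"
  unfolding expected_reward_def by (rule abs_expectation_le[OF abs_reward_le])

lemma expected_reward_nonneg: "0 \<le> expected_reward T \<pi> t s"
  unfolding expected_reward_def by (rule integral_nonneg_AE) (use reward_nonneg in auto)

lemma expected_reward_Suc:
  "expected_reward T \<pi> (Suc t) s
     = measure_pmf.expectation (\<pi> s) (\<lambda>a. measure_pmf.expectation (T s a) (expected_reward T \<pi> t))"
  unfolding expected_reward_def sa_dist_Suc_first_step
  by (simp add: expectation_bind_pmf[OF abs_reward_le] expectation_bind_pmf[OF abs_expectation_le[OF abs_reward_le]])

lemma Vfun_eq_suminf: "Vfun r \<gamma> T \<pi> s = (\<Sum>t. \<gamma>^t * expected_reward T \<pi> t s)"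
  by (simp add: Vfun_def expected_reward_def)

lemma Vfun_nonneg: "0 \<le> Vfun r \<gamma> T \<pi> s"
  unfolding Vfun_eq_suminf
  by (rule suminf_nonneg[OF summable_discounted[OF abs_expected_reward_le]])
     (use gamma_nonneg expected_reward_nonneg in auto)

lemma Vfun_le_Vmax: "Vfun r \<gamma> T \<pi> s \<le> Vmax r \<gamma>"
proof -
  have "(\<Sum>t. \<gamma>^t * expected_reward T \<pi> t s) \<le> (\<Sum>t. \<gamma>^t * Rmax r)"
    by (rule suminf_le[OF _ summable_discounted[OF abs_expected_reward_le] summable_discounted])
       (use abs_expected_reward_le gamma_nonneg Rmax_nonneg in \<open>auto intro!: mult_left_mono simp: abs_le_iff\<close>)
  also have "\<dots> = Rmax r / (1 - \<gamma>)"
    using gamma_nonneg gamma_less_1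
    by (simp add: suminf_mult2[symmetric, OF summable_geometric] suminf_geometric)
  finally show ?thesis by (simp add: Vfun_eq_suminf Vmax_def)
qed

lemma abs_Vfun_le: "\<bar>Vfun r \<gamma> T \<pi> s\<bar> \<le> Vmax r \<gamma>"
  using Vfun_nonneg Vfun_le_Vmax by auto

lemma abs_expectation_Vfun_le: "\<bar>measure_pmf.expectation p (Vfun r \<gamma> T \<pi>)\<bar> \<le> Vmax r \<gamma>"
  by (rule abs_expectation_le[OF abs_Vfun_le])

definition Qfun :: "('s,'a) kernel \<Rightarrow> ('s,'a) policy \<Rightarrow> 's \<times> 'a \<Rightarrow> real" where
  "Qfun T \<pi> = (\<lambda>(x, a). r x a + \<gamma> * measure_pmf.expectation (T x a) (Vfun r \<gamma> T \<pi>))"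

lemma abs_Qfun_le: "\<bar>Qfun T \<pi> y\<bar> \<le> Rmax r + Vmax r \<gamma>"
proof -
  obtain x a where y: "y = (x, a)" by (cases y)
  have "\<bar>\<gamma> * measure_pmf.expectation (T x a) (Vfun r \<gamma> T \<pi>)\<bar> \<le> 1 * Vmax r \<gamma>"
    unfolding abs_mult using gamma_nonneg gamma_less_1 abs_expectation_Vfun_le
    by (intro mult_mono) auto
  thus ?thesis using abs_reward_le[of y] unfolding Qfun_def y by auto
qed

lemma Vfun_bellman: "Vfun r \<gamma> T \<pi> s = measure_pmf.expectation (\<pi> s) (\<lambda>a. Qfun T \<pi> (s, a))"
proof -
  let ?E = "\<lambda>t a. measure_pmf.expectation (T s a) (expected_reward T \<pi> t)"
  have bounded: "\<bar>?E t a\<bar> \<le> Rmax r" for t a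
    by (rule abs_expectation_le[OF abs_expected_reward_le])
  have summable: "summable (\<lambda>t. \<gamma>^t * expected_reward T \<pi> t s)"
    by (rule summable_discounted[OF abs_expected_reward_le])
  have "Vfun r \<gamma> T \<pi> s = expected_reward T \<pi> 0 s + (\<Sum>t. \<gamma>^Suc t * expected_reward T \<pi> (Suc t) s)"
    unfolding Vfun_eq_suminf using suminf_split_head[OF summable] by simp
  also have "(\<Sum>t. \<gamma>^Suc t * expected_reward T \<pi> (Suc t) s)
      = \<gamma> * (\<Sum>t. \<gamma>^t * measure_pmf.expectation (\<pi> s) (\<lambda>a. ?E t a))"
    unfolding expected_reward_Suc power_Suc mult.assoc
    by (rule suminf_mult[OF summable_discounted[OF abs_expectation_le[OF bounded]]])
  also have "(\<Sum>t. \<gamma>^t * measure_pmf.expectation (\<pi> s) (\<lambda>a. ?E t a))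
      = measure_pmf.expectation (\<pi> s) (\<lambda>a. measure_pmf.expectation (T s a) (Vfun r \<gamma> T \<pi>))"
    unfolding Vfun_eq_suminf
    by (subst expectation_discounted_suminf[OF gamma_nonneg gamma_less_1 abs_expected_reward_le],
        rule expectation_discounted_suminf[symmetric, OF gamma_nonneg gamma_less_1 bounded])
  finally have "Vfun r \<gamma> T \<pi> s = expected_reward T \<pi> 0 s
      + \<gamma> * measure_pmf.expectation (\<pi> s) (\<lambda>a. measure_pmf.expectation (T s a) (Vfun r \<gamma> T \<pi>))" .
  moreover have "integrable (measure_pmf (\<pi> s)) (\<lambda>a. r s a)"
    by (rule integrable_pmf_bounded[where B="Rmax r"]) (use abs_reward_le[of "(s, _)"] in auto)
  moreover have "integrable (measure_pmf (\<pi> s)) (\<lambda>a. measure_pmf.expectation (T s a) (Vfun r \<gamma> T \<pi>))"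
    by (rule integrable_pmf_bounded[OF abs_expectation_Vfun_le])
  ultimately show ?thesis by (simp add: expected_reward_def Qfun_def)
qed

lemma step_expectation_Qfun:
  "step_expectation T \<pi> (Qfun T' \<pi>) = (\<lambda>(x, a). measure_pmf.expectation (T x a) (Vfun r \<gamma> T' \<pi>))"
  by (simp add: step_expectation_def Vfun_bellman[symmetric])

end

context discounted_mdp
begin

text \<open>The normalized occupancy is the law of the state-action pair at an independent time
  with distribution geometric_pmf (1 - \<gamma>).\<close>
definition occ_pmf :: "'s \<Rightarrow> ('s,'a) kernel \<Rightarrow> ('s,'a) policy \<Rightarrow> ('s \<times> 'a) pmf" where
  "occ_pmf s0 T \<pi> = bind_pmf (geometric_pmf (1 - \<gamma>)) (sa_dist T \<pi> s0)"

lemma expectation_geometric: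
  fixes f :: "nat \<Rightarrow> real"
  assumes "\<And>t. \<bar>f t\<bar> \<le> B"
  shows "measure_pmf.expectation (geometric_pmf (1 - \<gamma>)) f = (1 - \<gamma>) * (\<Sum>t. \<gamma>^t * f t)"
proof -
  have "measure_pmf.expectation (geometric_pmf (1 - \<gamma>)) f = (\<Sum>t. (1 - \<gamma>) * (\<gamma>^t * f t))"
    using gamma_nonneg gamma_less_1 by (subst expectation_eq_suminf_nat[OF assms]) (simp add: mult_ac)
  also have "\<dots> = (1 - \<gamma>) * (\<Sum>t. \<gamma>^t * f t)"
    by (rule suminf_mult[OF summable_discounted[OF assms]])
  finally show ?thesis .
qed

lemma occ_eq_pmf_occ_pmf: "occ \<gamma> s0 T \<pi> = pmf (occ_pmf s0 T \<pi>)"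
proof
  fix x
  have "pmf (occ_pmf s0 T \<pi>) x
      = measure_pmf.expectation (geometric_pmf (1 - \<gamma>)) (\<lambda>t. pmf (sa_dist T \<pi> s0 t) x)"
    by (simp add: occ_pmf_def pmf_bind)
  also have "\<dots> = (1 - \<gamma>) * (\<Sum>t. \<gamma>^t * pmf (sa_dist T \<pi> s0 t) x)"
    by (rule expectation_geometric[where B=1]) (simp add: pmf_le_1)
  finally show "occ \<gamma> s0 T \<pi> x = pmf (occ_pmf s0 T \<pi>) x" by (simp add: occ_def)
qed

lemma occ_exp_occ_eq_expectation:
  fixes f :: "'s \<times> 'a \<Rightarrow> real"
  assumes "\<And>x. \<bar>f x\<bar> \<le> B"
  shows "occ_exp (occ \<gamma> s0 T \<pi>) f = measure_pmf.expectation (occ_pmf s0 T \<pi>) f"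
  by (simp add: occ_exp_def occ_eq_pmf_occ_pmf expectation_eq_infsum_pmf[OF assms])

lemma expectation_occ_pmf:
  fixes f :: "'s \<times> 'a \<Rightarrow> real"
  assumes "\<And>x. \<bar>f x\<bar> \<le> B"
  shows "measure_pmf.expectation (occ_pmf s0 T \<pi>) f
       = (1 - \<gamma>) * (\<Sum>t. \<gamma>^t * measure_pmf.expectation (sa_dist T \<pi> s0 t) f)"
  unfolding occ_pmf_def
  by (subst expectation_bind_pmf[OF assms], rule expectation_geometric)
     (rule abs_expectation_le[OF assms])

lemma suminf_discounted_expectation_sa_dist:
  fixes f :: "'s \<times> 'a \<Rightarrow> real"
  assumes "\<And>x. \<bar>f x\<bar> \<le> B"
  shows "(\<Sum>t. \<gamma>^t * measure_pmf.expectation (sa_dist T \<pi> s0 t) f)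
       = measure_pmf.expectation (occ_pmf s0 T \<pi>) f / (1 - \<gamma>)"
  using expectation_occ_pmf[OF assms, of s0 T \<pi>] gamma_less_1 by simp

lemma discounted_telescope_sums:
  assumes "\<And>t. \<bar>u t\<bar> \<le> B"
  shows "(\<lambda>t. \<gamma>^t * u t - \<gamma>^Suc t * u (Suc t)) sums u 0"
proof -
  have "(\<lambda>t. \<gamma>^t * u t) \<longlonglongrightarrow> 0"
  proof (rule Lim_null_comparison)
    show "\<forall>\<^sub>F t in sequentially. norm (\<gamma>^t * u t) \<le> \<gamma>^t * B"
      using assms gamma_nonneg by (intro always_eventually allI) (auto simp: abs_mult intro!: mult_left_mono)
    show "(\<lambda>t. \<gamma>^t * B) \<longlonglongrightarrow> 0"
      using gamma_nonneg gamma_less_1 by (intro tendsto_mult_left_zero LIMSEQ_power_zero) auto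
  qed
  from telescope_sums'[OF this] show ?thesis by simp
qed

lemma expected_reward_eq_Qfun_step:
  "expected_reward T \<pi> t s0 = measure_pmf.expectation (sa_dist T \<pi> s0 t) (Qfun T' \<pi>)
     - \<gamma> * measure_pmf.expectation (sa_dist T \<pi> s0 (Suc t)) (Qfun T' \<pi>)
     + \<gamma> * measure_pmf.expectation (sa_dist T \<pi> s0 t)
         (\<lambda>(x, a). measure_pmf.expectation (T x a) (Vfun r \<gamma> T' \<pi>)
                 - measure_pmf.expectation (T' x a) (Vfun r \<gamma> T' \<pi>))"
proof -
  let ?E = "measure_pmf.expectation (sa_dist T \<pi> s0 t)"
  define P where "P = (\<lambda>(x::'s, a::'a). measure_pmf.expectation (T x a) (Vfun r \<gamma> T' \<pi>))"
  define P' where "P' = (\<lambda>(x::'s, a::'a). measure_pmf.expectation (T' x a) (Vfun r \<gamma> T' \<pi>))"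
  have integrable: "integrable (measure_pmf (sa_dist T \<pi> s0 t)) (case_prod r)"
      "integrable (measure_pmf (sa_dist T \<pi> s0 t)) P"
      "integrable (measure_pmf (sa_dist T \<pi> s0 t)) P'"
    by (rule integrable_pmf_bounded[where B="Rmax r"], rule abs_reward_le)
       (auto simp: P_def P'_def abs_expectation_Vfun_le split: prod.splits
             intro!: integrable_pmf_bounded[where B="Vmax r \<gamma>"])
  have "Qfun T' \<pi> = (\<lambda>y. case_prod r y + \<gamma> * P' y)"
    by (auto simp: Qfun_def P'_def)
  hence "?E (Qfun T' \<pi>) = expected_reward T \<pi> t s0 + \<gamma> * ?E P'"
    using integrable by (simp add: expected_reward_def)
  moreover have "measure_pmf.expectation (sa_dist T \<pi> s0 (Suc t)) (Qfun T' \<pi>) = ?E P"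
    unfolding expectation_sa_dist_Suc[where f="Qfun T' \<pi>", OF abs_Qfun_le]
    by (simp add: P_def step_expectation_Qfun)
  moreover have "(\<lambda>(x, a). measure_pmf.expectation (T x a) (Vfun r \<gamma> T' \<pi>)
                 - measure_pmf.expectation (T' x a) (Vfun r \<gamma> T' \<pi>)) = (\<lambda>y. P y - P' y)"
    by (auto simp: P_def P'_def)
  ultimately show ?thesis using integrable by (simp add: right_diff_distrib)
qed

text \<open>With Q' the action-value function of T', the expectation of Q' at time t + 1 under T is the
  expectation at time t of the T-successor value of V', so the rewards under T telescope into
  V'(s0) plus the discounted one-step model errors.\<close>
lemma simulation_lemma:
  "eta r \<gamma> s0 T \<pi> - eta r \<gamma> s0 T' \<pi> = \<gamma> / (1 - \<gamma>) *
     measure_pmf.expectation (occ_pmf s0 T \<pi>)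
       (\<lambda>(x, a). measure_pmf.expectation (T x a) (Vfun r \<gamma> T' \<pi>)
               - measure_pmf.expectation (T' x a) (Vfun r \<gamma> T' \<pi>))"
  (is "_ = _ * measure_pmf.expectation _ ?err")
proof -
  define u where "u = (\<lambda>t. measure_pmf.expectation (sa_dist T \<pi> s0 t) (Qfun T' \<pi>))"
  define e where "e = (\<lambda>t. measure_pmf.expectation (sa_dist T \<pi> s0 t) ?err)"
  have err_bound: "\<bar>?err y\<bar> \<le> 2 * Vmax r \<gamma>" for y
    using abs_expectation_Vfun_le[of "T (fst y) (snd y)" T' \<pi>]
          abs_expectation_Vfun_le[of "T' (fst y) (snd y)" T' \<pi>] by (cases y) auto
  have u_bound: "\<bar>u t\<bar> \<le> Rmax r + Vmax r \<gamma>" for t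
    unfolding u_def by (rule abs_expectation_le[OF abs_Qfun_le])
  have reward_series: "(\<lambda>t. \<gamma>^t * expected_reward T \<pi> t s0)
      = (\<lambda>t. (\<gamma>^t * u t - \<gamma>^Suc t * u (Suc t)) + \<gamma> * (\<gamma>^t * e t))"
    unfolding expected_reward_eq_Qfun_step[of T \<pi> _ s0 T'] u_def e_def by (simp add: algebra_simps)
  have "summable (\<lambda>t. \<gamma>^t * e t)"
    unfolding e_def by (rule summable_discounted[OF abs_expectation_le[where f="?err", OF err_bound]])
  hence "(\<lambda>t. \<gamma>^t * expected_reward T \<pi> t s0) sums (u 0 + \<gamma> * (\<Sum>t. \<gamma>^t * e t))"
    unfolding reward_series by (intro sums_add discounted_telescope_sums[OF u_bound] sums_mult summable_sums)
  moreover have "u 0 = eta r \<gamma> s0 T' \<pi>"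
    by (simp add: u_def eta_def Vfun_bellman[of T'])
  ultimately show ?thesis
    by (simp add: eta_def Vfun_eq_suminf[of T] sums_iff e_def
                  suminf_discounted_expectation_sa_dist[OF err_bound])
qed

lemma occ_pmf_fixpoint:
  fixes f :: "'s \<times> 'a \<Rightarrow> real"
  assumes "\<And>x. \<bar>f x\<bar> \<le> B"
  shows "measure_pmf.expectation (occ_pmf s0 T \<pi>) f
     = (1 - \<gamma>) * measure_pmf.expectation (sa_dist T \<pi> s0 0) f
       + \<gamma> * measure_pmf.expectation (occ_pmf s0 T \<pi>) (step_expectation T \<pi> f)"
proof -
  let ?e = "\<lambda>t. \<gamma>^t * measure_pmf.expectation (sa_dist T \<pi> s0 t) f"
  have summable: "summable ?e" by (rule summable_discounted[OF abs_expectation_le[OF assms]])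
  have "(\<Sum>t. ?e t) = ?e 0 + (\<Sum>t. ?e (Suc t))"
    using suminf_split_head[OF summable] by simp
  also have "(\<Sum>t. ?e (Suc t))
      = \<gamma> * (\<Sum>t. \<gamma>^t * measure_pmf.expectation (sa_dist T \<pi> s0 t) (step_expectation T \<pi> f))"
    unfolding expectation_sa_dist_Suc[OF assms] power_Suc mult.assoc
    by (rule suminf_mult[OF summable_discounted[OF abs_expectation_le[OF abs_step_expectation_le[OF assms]]]])
  finally show ?thesis
    unfolding expectation_occ_pmf[OF assms] expectation_occ_pmf[OF abs_step_expectation_le[OF assms]]
    by (simp add: algebra_simps)
qed

text \<open>Writing D for the largest such change over test functions with values in
  [0, 1], the fixpoint equation of the occupancy gives D \<le> \<gamma> D + \<gamma> \<epsilon>.\<close>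
lemma expectation_occ_pmf_diff_le:
  fixes f :: "'s \<times> 'a \<Rightarrow> real"
  assumes f_unit: "\<And>x. 0 \<le> f x \<and> f x \<le> 1"
  shows "measure_pmf.expectation (occ_pmf s0 T \<pi>) f - measure_pmf.expectation (occ_pmf s0 T' \<pi>) f
     \<le> \<gamma> / (1 - \<gamma>) * measure_pmf.expectation (occ_pmf s0 T' \<pi>) (\<lambda>(x, a). TV (T x a) (T' x a))"
proof -
  define F where "F = {f :: 's \<times> 'a \<Rightarrow> real. \<forall>x. 0 \<le> f x \<and> f x \<le> 1}"
  define change where "change = (\<lambda>f :: 's \<times> 'a \<Rightarrow> real. measure_pmf.expectation (occ_pmf s0 T \<pi>) f
                                      - measure_pmf.expectation (occ_pmf s0 T' \<pi>) f)"
  define \<epsilon> where "\<epsilon> = measure_pmf.expectation (occ_pmf s0 T' \<pi>) (\<lambda>(x, a). TV (T x a) (T' x a))"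
  define D where "D = (SUP f\<in>F. change f)"
  have F_unit: "\<And>x. 0 \<le> f x \<and> f x \<le> 1" if "f \<in> F" for f
    using that unfolding F_def by blast
  have "change f \<le> 1" if "f \<in> F" for f
    using abs_expectation_diff_le[where f=f and B=1] F_unit[OF that] by (simp add: change_def abs_le_iff)
  hence bdd: "bdd_above (change ` F)" by (auto intro!: bdd_aboveI2)
  have step: "change f \<le> \<gamma> * D + \<gamma> * \<epsilon>" if "f \<in> F" for f
  proof -
    note unit = F_unit[OF that]
    have bound: "\<And>x. \<bar>f x\<bar> \<le> 1" using unit by (simp add: abs_le_iff)
    let ?E' = "measure_pmf.expectation (occ_pmf s0 T' \<pi>)"
    have "change f = \<gamma> * change (step_expectation T \<pi> f)
        + \<gamma> * (?E' (step_expectation T \<pi> f) - ?E' (step_expectation T' \<pi> f))"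
      unfolding change_def occ_pmf_fixpoint[OF bound, of s0 T] occ_pmf_fixpoint[OF bound, of s0 T']
      by (simp add: algebra_simps)
    also have "change (step_expectation T \<pi> f) \<le> D"
      unfolding D_def F_def using step_expectation_unit_interval[where f=f, OF unit]
      by (intro cSUP_upper[OF _ bdd[unfolded F_def]]) blast
    also have "?E' (step_expectation T \<pi> f) - ?E' (step_expectation T' \<pi> f) \<le> \<epsilon>"
      unfolding \<epsilon>_def by (rule expectation_step_expectation_diff_le_TV[where f=f, OF unit])
    finally show ?thesis using gamma_nonneg by (simp add: mult_left_mono)
  qed
  have "D \<le> \<gamma> * D + \<gamma> * \<epsilon>"
    unfolding D_def by (rule cSUP_least) (use step in \<open>auto simp: D_def F_def intro: exI[of _ "\<lambda>_. 0"]\<close>)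
  hence "D \<le> \<gamma> * \<epsilon> / (1 - \<gamma>)" using gamma_less_1 by (simp add: field_simps)
  moreover have "change f \<le> D"
    unfolding D_def by (rule cSUP_upper[OF _ bdd]) (use f_unit in \<open>auto simp: F_def\<close>)
  ultimately show ?thesis unfolding change_def \<epsilon>_def by simp
qed

end

section \<open>The offline model-based guarantee\<close>

lemma discounted_error_sum_le:
  fixes \<gamma> X :: real
  assumes "0 \<le> \<gamma>" "\<gamma> < 1" "0 \<le> X"
  shows "\<gamma> / (1 - \<gamma>) * X + X / (1 - \<gamma>) + 5 * (\<gamma> / (1 - \<gamma>)) * X / (1 - \<gamma>) \<le> 6 * X / (1 - \<gamma>)^2"
proof -
  define d where "d = 1 - \<gamma>"
  have d: "0 < d" "\<gamma> = 1 - d" "d \<le> 1" using assms by (auto simp: d_def)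
  have "\<gamma> / d * X + X / d + 5 * (\<gamma> / d) * X / d = X * (\<gamma> * d + d + 5 * \<gamma>) / d^2"
    using d by (simp add: field_simps power2_eq_square)
  also have "\<dots> \<le> X * 6 / d^2"
  proof (rule divide_right_mono[OF mult_left_mono[OF _ assms(3)]])
    have "\<gamma> * d \<le> 1 * d" using d assms by (intro mult_right_mono) auto
    thus "\<gamma> * d + d + 5 * \<gamma> \<le> 6" using d by linarith
  qed simp
  finally show ?thesis by (simp add: d_def mult.commute)
qed

locale offline_setting = discounted_mdp r \<gamma> for r :: "'s \<Rightarrow> 'a \<Rightarrow> real" and \<gamma> :: real +
  fixes s0 :: 's and \<zeta> :: real and \<mu>h :: "('s \<times> 'a) pmf" and \<mu> :: "('s \<times> 'a \<times> 's) pmf"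
    and Tstar :: "('s,'a) kernel" and G :: "('s \<Rightarrow> real) set"
  assumes zeta_pos: "0 < \<zeta>" and finite_G: "finite G" and G_nonempty: "G \<noteq> {}"
    and G_range: "\<forall>g\<in>G. \<forall>s. 0 \<le> g s \<and> g s \<le> Vmax r \<gamma>"
    and mu_factorization: "\<forall>s a s'. pmf \<mu> (s, a, s') = pmf (sa_marg \<mu>) (s, a) * pmf (Tstar s a) s'"
begin

abbreviation "Vm \<equiv> Vmax r \<gamma>"

text \<open>\<nu> is the state-action marginal that the paper also calls \<mu>.\<close>
abbreviation "\<nu> \<equiv> sa_marg \<mu>"

definition weight :: "('s,'a) policy \<Rightarrow> ('s,'a) kernel \<Rightarrow> 's \<times> 'a \<Rightarrow> real" where
  "weight \<pi> T = w_pol \<gamma> s0 \<zeta> \<mu>h \<pi> T"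

lemma weight_eq_wtr: "weight \<pi> T = wtr \<zeta> (pmf (occ_pmf s0 T \<pi>)) \<mu>h"
  by (simp add: weight_def w_pol_def occ_eq_pmf_occ_pmf)

lemma weight_nonneg: "0 \<le> weight \<pi> T x"
  unfolding weight_eq_wtr by (rule wtr_nonneg)

lemma weight_le: "weight \<pi> T x \<le> \<zeta>"
  unfolding weight_eq_wtr by (rule wtr_le) (use zeta_pos in auto)

lemma abs_weight_le: "\<bar>weight \<pi> T x\<bar> \<le> \<zeta>"
  using weight_nonneg weight_le by simp

lemma abs_weight_times_le: "\<bar>c\<bar> \<le> B \<Longrightarrow> \<bar>weight \<pi> T x * c\<bar> \<le> \<zeta> * B"
  unfolding abs_mult using zeta_pos by (intro mult_mono abs_weight_le) auto

lemma G_nonneg: "g \<in> G \<Longrightarrow> 0 \<le> g s"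
  using G_range by auto

lemma G_le_Vmax: "g \<in> G \<Longrightarrow> g s \<le> Vm"
  using G_range by auto

lemma abs_G_le: "g \<in> G \<Longrightarrow> \<bar>g s\<bar> \<le> Vm"
  using G_nonneg G_le_Vmax by simp

lemma fT_nonneg: "g \<in> G \<Longrightarrow> 0 \<le> fT T g s a"
  unfolding fT_def by (rule expectation_ge_const[where B=Vm]) (auto intro: G_nonneg abs_G_le)

lemma fT_le_Vmax: "g \<in> G \<Longrightarrow> fT T g s a \<le> Vm"
  unfolding fT_def by (rule expectation_le_const[where B=Vm]) (auto intro: G_le_Vmax abs_G_le)

lemma abs_fT_diff_le: "g \<in> G \<Longrightarrow> \<bar>fT T g s a - fT T' g s a\<bar> \<le> Vm"
  using fT_nonneg[of g T s a] fT_le_Vmax[of g T s a] fT_nonneg[of g T' s a] fT_le_Vmax[of g T' s a]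
  by (simp add: abs_le_iff)

lemma abs_fT_minus_le: "g \<in> G \<Longrightarrow> \<bar>fT T g s a - g s'\<bar> \<le> Vm"
  using fT_nonneg[of g T s a] fT_le_Vmax[of g T s a] G_nonneg[of g s'] G_le_Vmax[of g s']
  by (simp add: abs_le_iff)

definition residual :: "('s \<Rightarrow> real) \<Rightarrow> ('s,'a) kernel \<Rightarrow> ('s,'a) policy \<Rightarrow> 's \<times> 'a \<times> 's \<Rightarrow> real" where
  "residual g T \<pi> = (\<lambda>(s, a, s'). weight \<pi> T (s, a) * (fT T g s a - g s'))"

definition emp_mean :: "('s \<times> 'a \<times> 's) list \<Rightarrow> ('s \<Rightarrow> real) \<Rightarrow> ('s,'a) kernel \<Rightarrow> ('s,'a) policy \<Rightarrow> real" where
  "emp_mean D g T \<pi> = sum_list (map (residual g T \<pi>) D) / real (length D)"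

definition pop_mean :: "('s \<Rightarrow> real) \<Rightarrow> ('s,'a) kernel \<Rightarrow> ('s,'a) policy \<Rightarrow> real" where
  "pop_mean g T \<pi> = measure_pmf.expectation \<mu> (residual g T \<pi>)"

lemma emp_loss_eq_abs_emp_mean: "emp_loss (w_pol \<gamma> s0 \<zeta> \<mu>h \<pi> T) D g T = \<bar>emp_mean D g T \<pi>\<bar>"
  by (simp add: emp_loss_def emp_mean_def residual_def weight_def case_prod_beta')

lemma abs_residual_le: "g \<in> G \<Longrightarrow> \<bar>residual g T \<pi> z\<bar> \<le> \<zeta> * Vm"
  unfolding residual_def by (cases z) (simp add: abs_weight_times_le abs_fT_minus_le)

lemma abs_pop_mean_le: "g \<in> G \<Longrightarrow> \<bar>pop_mean g T \<pi>\<bar> \<le> \<zeta> * Vm"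
  unfolding pop_mean_def by (rule abs_expectation_le[OF abs_residual_le])

lemma pop_mean_eq:
  assumes g: "g \<in> G"
  shows "pop_mean g T \<pi> = measure_pmf.expectation \<nu> (\<lambda>(s, a). weight \<pi> T (s, a) * (fT T g s a - fT Tstar g s a))"
proof -
  have "pop_mean g T \<pi> = measure_pmf.expectation \<nu>
     (\<lambda>y. measure_pmf.expectation ((\<lambda>(s, a). map_pmf (\<lambda>s'. (s, a, s')) (Tstar s a)) y) (residual g T \<pi>))"
    unfolding pop_mean_def
    by (subst pmf_eq_bind_sa_marg[OF mu_factorization]) (rule expectation_bind_pmf[OF abs_residual_le[OF g]])
  also have "\<dots> = measure_pmf.expectation \<nu> (\<lambda>(s, a). weight \<pi> T (s, a) * (fT T g s a - fT Tstar g s a))"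
    using integrable_pmf_bounded[where f=g, OF abs_G_le[OF g]]
    by (intro Bochner_Integration.integral_cong) (auto simp: residual_def fT_def)
  finally show ?thesis .
qed

lemma abs_emp_mean_le_SUP: "g \<in> G \<Longrightarrow> \<bar>emp_mean D g T \<pi>\<bar> \<le> (SUP g\<in>G. \<bar>emp_mean D g T \<pi>\<bar>)"
  by (rule cSUP_upper) (use finite_G in auto)

lemma SUP_abs_emp_mean_nonneg: "0 \<le> (SUP g\<in>G. \<bar>emp_mean D g T \<pi>\<bar>)"
proof -
  obtain g where "g \<in> G" using G_nonempty by auto
  thus ?thesis using abs_emp_mean_le_SUP[of g D T \<pi>] by linarith
qed

lemma lb_eq:
  "lb r \<gamma> s0 \<zeta> \<mu>h G D T \<pi> = eta r \<gamma> s0 T \<pi> - ((SUP g\<in>G. \<bar>emp_mean D g T \<pi>\<bar>)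
      + Vm * measure_pmf.expectation (occ_pmf s0 T \<pi>)
          (\<lambda>x. if ratio_exceeds \<zeta> (pmf (occ_pmf s0 T \<pi>)) \<mu>h x then 1 else 0)) / (1 - \<gamma>)"
  unfolding lb_def emp_loss_eq_abs_emp_mean
  by (subst occ_exp_occ_eq_expectation[where B=1]) (auto simp: occ_eq_pmf_occ_pmf)

definition model_gap :: "('s,'a) kernel \<Rightarrow> ('s,'a) policy \<Rightarrow> 's \<times> 'a \<Rightarrow> real" where
  "model_gap T \<pi> = (\<lambda>(x, a). measure_pmf.expectation (T x a) (Vfun r \<gamma> Tstar \<pi>)
                           - measure_pmf.expectation (Tstar x a) (Vfun r \<gamma> Tstar \<pi>))"

lemma abs_model_gap_le: "\<bar>model_gap T \<pi> y\<bar> \<le> Vm"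
  unfolding model_gap_def
  by (cases y) (simp add: abs_expectation_diff_le[where f="Vfun r \<gamma> Tstar \<pi>", OF Vfun_nonneg Vfun_le_Vmax])

definition value_fit_error :: "('s \<Rightarrow> real) \<Rightarrow> ('s,'a) kernel \<Rightarrow> ('s,'a) policy \<Rightarrow> real" where
  "value_fit_error g T \<pi> = \<bar>measure_pmf.expectation \<nu> (\<lambda>(s, a). w_pol \<gamma> s0 \<zeta> \<mu>h \<pi> T (s, a) *
      (measure_pmf.expectation (T s a) (\<lambda>s'. g s' - Vfun r \<gamma> Tstar \<pi> s')
       - measure_pmf.expectation (Tstar s a) (\<lambda>s'. g s' - Vfun r \<gamma> Tstar \<pi> s')))\<bar>"

lemma eps_V_attained: "\<exists>g\<in>G. eps_V r \<gamma> s0 \<zeta> \<mu>h \<mu> Tstar G T \<pi> = value_fit_error g T \<pi>"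
proof -
  obtain g where g: "g \<in> G" and attained: "value_fit_error g T \<pi> = (INF g\<in>G. value_fit_error g T \<pi>)"
    using finite_INF_attained[OF finite_G G_nonempty, of "\<lambda>g. value_fit_error g T \<pi>"] by blast
  have "eps_V r \<gamma> s0 \<zeta> \<mu>h \<mu> Tstar G T \<pi> = (INF g\<in>G. value_fit_error g T \<pi>)"
    by (simp only: eps_V_def value_fit_error_def)
  with g attained show ?thesis by (intro bexI[of _ g]) simp_all
qed

lemma eps_V_nonneg: "0 \<le> eps_V r \<gamma> s0 \<zeta> \<mu>h \<mu> Tstar G T \<pi>"
  using eps_V_attained[of T \<pi>] by (auto simp: value_fit_error_def)

text \<open>Replacing V by g in the weighted model gap costs exactly the value-fit error of g.\<close>
lemma expectation_weighted_gap_le: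
  assumes g: "g \<in> G"
  shows "measure_pmf.expectation \<nu> (\<lambda>x. weight \<pi> T x * model_gap T \<pi> x)
       \<le> pop_mean g T \<pi> + value_fit_error g T \<pi>"
proof -
  let ?V = "Vfun r \<gamma> Tstar \<pi>"
  define F1 where "F1 = (\<lambda>(s, a). weight \<pi> T (s, a) * (fT T g s a - fT Tstar g s a))"
  define F2 where "F2 = (\<lambda>(s, a). weight \<pi> T (s, a) *
      (measure_pmf.expectation (T s a) (\<lambda>s'. g s' - ?V s')
       - measure_pmf.expectation (Tstar s a) (\<lambda>s'. g s' - ?V s')))"
  have fit_bound: "\<bar>g s' - ?V s'\<bar> \<le> Vm" for s'
    using G_nonneg[OF g, of s'] G_le_Vmax[OF g, of s'] Vfun_nonneg[of Tstar \<pi> s'] Vfun_le_Vmax[of Tstar \<pi> s']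
    by (simp add: abs_le_iff)
  have F1_bound: "\<bar>F1 y\<bar> \<le> \<zeta> * Vm" for y
    unfolding F1_def by (cases y) (simp add: abs_weight_times_le abs_fT_diff_le[OF g])
  have F2_bound: "\<bar>F2 y\<bar> \<le> \<zeta> * (2 * Vm)" for y
  proof -
    obtain s a where y: "y = (s, a)" by (cases y)
    have "\<bar>measure_pmf.expectation (T s a) (\<lambda>s'. g s' - ?V s')
           - measure_pmf.expectation (Tstar s a) (\<lambda>s'. g s' - ?V s')\<bar> \<le> 2 * Vm"
      using abs_expectation_le[where f="\<lambda>s'. g s' - ?V s'", OF fit_bound, of "T s a"]
            abs_expectation_le[where f="\<lambda>s'. g s' - ?V s'", OF fit_bound, of "Tstar s a"]
      by linarith
    thus ?thesis unfolding F2_def y by (simp only: prod.case abs_weight_times_le)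
  qed
  have "weight \<pi> T x * model_gap T \<pi> x = F1 x - F2 x" for x
    using integrable_pmf_bounded[where f=g, OF abs_G_le[OF g]]
          integrable_pmf_bounded[where f="?V", OF abs_Vfun_le]
    by (cases x) (simp add: F1_def F2_def model_gap_def fT_def algebra_simps)
  hence "measure_pmf.expectation \<nu> (\<lambda>x. weight \<pi> T x * model_gap T \<pi> x)
       = measure_pmf.expectation \<nu> F1 - measure_pmf.expectation \<nu> F2"
    using integrable_pmf_bounded[where f=F1, OF F1_bound]
          integrable_pmf_bounded[where f=F2, OF F2_bound] by simp
  moreover have "measure_pmf.expectation \<nu> F1 = pop_mean g T \<pi>"
    by (simp add: pop_mean_eq[OF g] F1_def)
  moreover have "\<bar>measure_pmf.expectation \<nu> F2\<bar> = value_fit_error g T \<pi>"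
    by (simp add: value_fit_error_def F2_def weight_def)
  ultimately show ?thesis by linarith
qed

lemma expectation_model_gap_le:
  "measure_pmf.expectation (occ_pmf s0 T \<pi>) (model_gap T \<pi>)
     \<le> Vm * measure_pmf.expectation (occ_pmf s0 T \<pi>)
             (\<lambda>x. if ratio_exceeds \<zeta> (pmf (occ_pmf s0 T \<pi>)) \<mu>h x then 1 else 0)
       + measure_pmf.expectation \<nu> (\<lambda>x. weight \<pi> T x * model_gap T \<pi> x) + \<zeta> * Vm * TV \<mu>h \<nu>"
proof -
  let ?\<rho> = "occ_pmf s0 T \<pi>"
  let ?exc = "\<lambda>x. if ratio_exceeds \<zeta> (pmf ?\<rho>) \<mu>h x then 1 else (0::real)"
  have weighted_gap_bound: "\<bar>weight \<pi> T x * model_gap T \<pi> x\<bar> \<le> \<zeta> * Vm" for x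
    by (rule abs_weight_times_le[OF abs_model_gap_le])
  have "measure_pmf.expectation ?\<rho> (model_gap T \<pi>)
      = measure_pmf.expectation \<mu>h (\<lambda>x. weight \<pi> T x * model_gap T \<pi> x)
        + measure_pmf.expectation ?\<rho> (\<lambda>x. ?exc x * model_gap T \<pi> x)"
    unfolding weight_eq_wtr using zeta_pos by (intro expectation_wtr_split[OF _ abs_model_gap_le]) auto
  moreover have "measure_pmf.expectation ?\<rho> (\<lambda>x. ?exc x * model_gap T \<pi> x)
      \<le> measure_pmf.expectation ?\<rho> (\<lambda>x. Vm * ?exc x)"
    using abs_model_gap_le[of T \<pi>] Vmax_nonneg
    by (intro expectation_mono_bounded[where B=Vm and B'=Vm]) (auto simp: abs_le_iff)
  moreover have "measure_pmf.expectation \<mu>h (\<lambda>x. weight \<pi> T x * model_gap T \<pi> x)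
      \<le> measure_pmf.expectation \<nu> (\<lambda>x. weight \<pi> T x * model_gap T \<pi> x) + \<zeta> * Vm * TV \<mu>h \<nu>"
    using abs_expectation_diff_le_TV[where f="\<lambda>x. weight \<pi> T x * model_gap T \<pi> x" and p=\<mu>h and q=\<nu>,
                                     OF weighted_gap_bound]
    by (simp add: abs_le_iff)
  ultimately show ?thesis by simp
qed

lemma lb_le_eta_star:
  assumes dev: "\<forall>g\<in>G. \<bar>emp_mean D g T \<pi> - pop_mean g T \<pi>\<bar> \<le> dev"
  shows "lb r \<gamma> s0 \<zeta> \<mu>h G D T \<pi>
           - (dev + eps_V r \<gamma> s0 \<zeta> \<mu>h \<mu> Tstar G T \<pi> + \<zeta> * Vm * TV \<mu>h \<nu>) / (1 - \<gamma>)
         \<le> eta r \<gamma> s0 Tstar \<pi>"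
proof -
  let ?\<rho> = "occ_pmf s0 T \<pi>"
  define L where "L = (SUP g\<in>G. \<bar>emp_mean D g T \<pi>\<bar>)"
  define K where "K = L + Vm * measure_pmf.expectation ?\<rho>
                               (\<lambda>x. if ratio_exceeds \<zeta> (pmf ?\<rho>) \<mu>h x then 1 else 0)"
  define R where "R = dev + eps_V r \<gamma> s0 \<zeta> \<mu>h \<mu> Tstar G T \<pi> + \<zeta> * Vm * TV \<mu>h \<nu>"
  obtain g where g: "g \<in> G" and fit: "eps_V r \<gamma> s0 \<zeta> \<mu>h \<mu> Tstar G T \<pi> = value_fit_error g T \<pi>"
    using eps_V_attained by blast
  have "pop_mean g T \<pi> \<le> L + dev"
    using abs_emp_mean_le_SUP[OF g, of D T \<pi>] dev g by (force simp: L_def)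
  hence gap: "measure_pmf.expectation ?\<rho> (model_gap T \<pi>) \<le> K + R"
    using expectation_model_gap_le[of T \<pi>] expectation_weighted_gap_le[OF g, of \<pi> T]
    by (simp add: K_def R_def fit)
  have "0 \<le> measure_pmf.expectation ?\<rho> (\<lambda>x. if ratio_exceeds \<zeta> (pmf ?\<rho>) \<mu>h x then 1 else (0::real))"
    by (rule integral_nonneg_AE) simp
  hence "0 \<le> K"
    unfolding K_def L_def by (intro add_nonneg_nonneg mult_nonneg_nonneg SUP_abs_emp_mean_nonneg Vmax_nonneg)
  moreover have "0 \<le> dev" using dev g by (meson abs_ge_zero order.trans)
  hence "0 \<le> R"
    unfolding R_def
    by (intro add_nonneg_nonneg mult_nonneg_nonneg eps_V_nonneg Vmax_nonneg TV_nonneg less_imp_le[OF zeta_pos])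
  ultimately have "\<gamma> * measure_pmf.expectation ?\<rho> (model_gap T \<pi>) \<le> K + R"
    using gap gamma_nonneg gamma_less_1 by (intro unit_mult_le) auto
  hence "\<gamma> * measure_pmf.expectation ?\<rho> (model_gap T \<pi>) / (1 - \<gamma>) \<le> (K + R) / (1 - \<gamma>)"
    by (rule divide_right_mono) (use gamma_less_1 in simp)
  moreover have "(K + R) / (1 - \<gamma>) = K / (1 - \<gamma>) + R / (1 - \<gamma>)"
    by (rule add_divide_distrib)
  moreover have "eta r \<gamma> s0 T \<pi> - eta r \<gamma> s0 Tstar \<pi>
      = \<gamma> * measure_pmf.expectation ?\<rho> (model_gap T \<pi>) / (1 - \<gamma>)"
    unfolding simulation_lemma model_gap_def by simp
  moreover have "lb r \<gamma> s0 \<zeta> \<mu>h G D T \<pi> = eta r \<gamma> s0 T \<pi> - K / (1 - \<gamma>)"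
    by (simp add: lb_eq K_def L_def)
  ultimately show ?thesis unfolding R_def[symmetric] by linarith
qed

end

context offline_setting
begin

definition model_tv :: "('s,'a) kernel \<Rightarrow> 's \<times> 'a \<Rightarrow> real" where
  "model_tv T = (\<lambda>(s, a). TV (T s a) (Tstar s a))"

lemma model_tv_nonneg: "0 \<le> model_tv T y"
  by (cases y) (simp add: model_tv_def TV_nonneg)

lemma model_tv_le_2: "model_tv T y \<le> 2"
  by (cases y) (simp add: model_tv_def TV_le_2)

lemma abs_model_tv_le: "\<bar>model_tv T y\<bar> \<le> 2"
  using model_tv_nonneg[of T y] model_tv_le_2[of T y] by simp

lemma eta_star_le_eta:
  "eta r \<gamma> s0 Tstar \<pi> - \<gamma> / (1 - \<gamma>) * (Vm * measure_pmf.expectation (occ_pmf s0 Tstar \<pi>) (model_tv T))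
     \<le> eta r \<gamma> s0 T \<pi>"
proof -
  let ?V = "Vfun r \<gamma> T \<pi>"
  let ?d = "\<lambda>(x, a). measure_pmf.expectation (Tstar x a) ?V - measure_pmf.expectation (T x a) ?V"
  have pointwise: "\<bar>?d y\<bar> \<le> Vm * model_tv T y" for y
    using abs_expectation_diff_le_TV[where f="?V", OF abs_Vfun_le, of "Tstar (fst y) (snd y)" "T (fst y) (snd y)"]
    by (cases y) (simp add: model_tv_def TV_commute)
  have "measure_pmf.expectation (occ_pmf s0 Tstar \<pi>) ?d
      \<le> measure_pmf.expectation (occ_pmf s0 Tstar \<pi>) (\<lambda>y. Vm * model_tv T y)"
  proof (rule expectation_mono_bounded[where B="Vm * 2" and B'="Vm * 2"])
    fix y
    have "Vm * model_tv T y \<le> Vm * 2" by (rule mult_left_mono[OF model_tv_le_2 Vmax_nonneg])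
    thus "\<bar>?d y\<bar> \<le> Vm * 2" "\<bar>Vm * model_tv T y\<bar> \<le> Vm * 2" "?d y \<le> Vm * model_tv T y"
      using pointwise[of y] Vmax_nonneg model_tv_nonneg[of T y] by (simp_all add: abs_le_iff)
  qed
  hence "\<gamma> / (1 - \<gamma>) * measure_pmf.expectation (occ_pmf s0 Tstar \<pi>) ?d
      \<le> \<gamma> / (1 - \<gamma>) * (Vm * measure_pmf.expectation (occ_pmf s0 Tstar \<pi>) (model_tv T))"
    using gamma_nonneg gamma_less_1 by (intro mult_left_mono) auto
  with simulation_lemma[of s0 Tstar \<pi> T] show ?thesis by linarith
qed

lemma expectation_occ_model_tv_le:
  fixes T :: "('s,'a) kernel" and \<pi> :: "('s,'a) policy"
  defines "\<epsilon> \<equiv> measure_pmf.expectation (occ_pmf s0 Tstar \<pi>) (model_tv T)"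
  shows "measure_pmf.expectation (occ_pmf s0 T \<pi>) (model_tv T) \<le> \<epsilon> + 2 * (\<gamma> / (1 - \<gamma>)) * \<epsilon>"
proof -
  have "measure_pmf.expectation (occ_pmf s0 T \<pi>) (\<lambda>x. model_tv T x / 2)
      - measure_pmf.expectation (occ_pmf s0 Tstar \<pi>) (\<lambda>x. model_tv T x / 2)
      \<le> \<gamma> / (1 - \<gamma>) * \<epsilon>"
    unfolding \<epsilon>_def model_tv_def[of T]
    by (rule expectation_occ_pmf_diff_le) (use model_tv_nonneg model_tv_le_2 in \<open>auto simp: model_tv_def\<close>)
  thus ?thesis by (simp add: \<epsilon>_def)
qed

text \<open>Pointwise |f^g_T - f^g_T*| \<le> Vmax TV; passing from \<nu> to \<mu>h costs the TV(\<mu>h, \<nu>) term,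
  and passing from \<mu>h to \<rho>^\<pi>_T uses that the truncated weight never exceeds the density ratio.\<close>
lemma abs_pop_mean_le_model_tv:
  assumes g: "g \<in> G"
  shows "\<bar>pop_mean g T \<pi>\<bar> \<le> Vm * measure_pmf.expectation (occ_pmf s0 T \<pi>) (model_tv T)
                                 + \<zeta> * Vm * TV \<mu>h \<nu> / 2"
proof -
  let ?\<rho> = "occ_pmf s0 T \<pi>"
  define h where "h = (\<lambda>(s, a). \<bar>fT T g s a - fT Tstar g s a\<bar>)"
  have h_nonneg: "0 \<le> h x" and h_bound: "\<bar>h x\<bar> \<le> Vm" for x
    by (cases x, simp add: h_def, cases x, simp add: h_def abs_fT_diff_le[OF g])
  have h_le_tv: "h x \<le> Vm * model_tv T x" for x
    using abs_expectation_diff_le_TV[where f=g, OF abs_G_le[OF g], of "T (fst x) (snd x)" "Tstar (fst x) (snd x)"]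
    by (cases x) (simp add: h_def model_tv_def fT_def)
  have weighted_h: "0 \<le> weight \<pi> T x * h x" "weight \<pi> T x * h x \<le> \<zeta> * Vm" for x
    using abs_weight_times_le[OF h_bound[of x], of \<pi> T x] weight_nonneg[of \<pi> T x] h_nonneg[of x] by auto
  have "\<bar>pop_mean g T \<pi>\<bar> \<le> measure_pmf.expectation \<nu>
      (\<lambda>x. \<bar>(\<lambda>(s, a). weight \<pi> T (s, a) * (fT T g s a - fT Tstar g s a)) x\<bar>)"
    unfolding pop_mean_eq[OF g] by (rule integral_abs_bound)
  also have "\<dots> = measure_pmf.expectation \<nu> (\<lambda>x. weight \<pi> T x * h x)"
    by (rule Bochner_Integration.integral_cong)
       (auto simp: h_def abs_mult abs_of_nonneg[OF weight_nonneg])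
  also have "\<dots> \<le> measure_pmf.expectation \<mu>h (\<lambda>x. weight \<pi> T x * h x) + \<zeta> * Vm / 2 * TV \<nu> \<mu>h"
    using expectation_diff_le_half_TV[where f="\<lambda>x. weight \<pi> T x * h x", OF weighted_h, of \<nu> \<mu>h]
    by linarith
  also have "measure_pmf.expectation \<mu>h (\<lambda>x. weight \<pi> T x * h x) \<le> measure_pmf.expectation ?\<rho> h"
    unfolding weight_eq_wtr using zeta_pos by (intro expectation_wtr_le[OF _ h_bound h_nonneg]) auto
  also have "\<dots> \<le> measure_pmf.expectation ?\<rho> (\<lambda>x. Vm * model_tv T x)"
  proof (rule expectation_mono_bounded[where B=Vm and B'="Vm * 2", OF h_bound _ h_le_tv])
    show "\<bar>Vm * model_tv T x\<bar> \<le> Vm * 2" for x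
      using mult_left_mono[OF model_tv_le_2 Vmax_nonneg, of T x] model_tv_nonneg[of T x] Vmax_nonneg
      by (simp add: abs_mult)
  qed
  finally show ?thesis by (simp add: TV_commute)
qed

lemma SUP_abs_emp_mean_le:
  assumes dev: "\<forall>g\<in>G. \<bar>emp_mean D g T \<pi> - pop_mean g T \<pi>\<bar> \<le> dev"
  shows "(SUP g\<in>G. \<bar>emp_mean D g T \<pi>\<bar>)
    \<le> Vm * measure_pmf.expectation (occ_pmf s0 T \<pi>) (model_tv T) + \<zeta> * Vm * TV \<mu>h \<nu> / 2 + dev"
proof (rule cSUP_least[OF G_nonempty])
  fix g assume "g \<in> G"
  thus "\<bar>emp_mean D g T \<pi>\<bar>
      \<le> Vm * measure_pmf.expectation (occ_pmf s0 T \<pi>) (model_tv T) + \<zeta> * Vm * TV \<mu>h \<nu> / 2 + dev"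
    using abs_pop_mean_le_model_tv[of g T \<pi>] dev by fastforce
qed

text \<open>The truncated event of \<rho>^\<pi>_T is covered by the \<zeta>/2-event of \<rho>^\<pi>_T*, whose mass is
  eps_mu, and by their difference, on which \<rho>^\<pi>_T* carries at most half the mass of \<rho>^\<pi>_T.\<close>
lemma expectation_excess_le:
  fixes T :: "('s,'a) kernel" and \<pi> :: "('s,'a) policy"
  defines "\<epsilon> \<equiv> measure_pmf.expectation (occ_pmf s0 Tstar \<pi>) (model_tv T)"
  shows "measure_pmf.expectation (occ_pmf s0 T \<pi>)
           (\<lambda>x. if ratio_exceeds \<zeta> (pmf (occ_pmf s0 T \<pi>)) \<mu>h x then 1 else 0)
         \<le> eps_mu \<gamma> s0 \<zeta> \<mu>h Tstar \<pi> + 3 * (\<gamma> / (1 - \<gamma>)) * \<epsilon>"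
proof -
  let ?\<rho> = "occ_pmf s0 T \<pi>" and ?\<rho>s = "occ_pmf s0 Tstar \<pi>"
  define exc where "exc = (\<lambda>x. if ratio_exceeds \<zeta> (pmf ?\<rho>) \<mu>h x then 1 else (0::real))"
  define excs where "excs = (\<lambda>x. if ratio_exceeds (\<zeta> / 2) (pmf ?\<rho>s) \<mu>h x then 1 else (0::real))"
  define A where "A = (\<lambda>x. if ratio_exceeds \<zeta> (pmf ?\<rho>) \<mu>h x \<and> \<not> ratio_exceeds (\<zeta> / 2) (pmf ?\<rho>s) \<mu>h x
                            then 1 else (0::real))"
  have bounds: "\<bar>excs x\<bar> \<le> 1" "\<bar>A x\<bar> \<le> 1" "\<bar>exc x\<bar> \<le> 1" for x
    by (auto simp: excs_def A_def exc_def)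
  have eps_mu: "eps_mu \<gamma> s0 \<zeta> \<mu>h Tstar \<pi> = measure_pmf.expectation ?\<rho>s excs"
    unfolding eps_mu_def excs_def
    by (subst occ_exp_occ_eq_expectation[where B=1]) (auto simp: occ_eq_pmf_occ_pmf)
  define c where "c = \<gamma> / (1 - \<gamma>)"
  have perturb: "measure_pmf.expectation ?\<rho> f - measure_pmf.expectation ?\<rho>s f \<le> c * \<epsilon>"
    if "\<And>x. 0 \<le> f x \<and> f x \<le> 1" for f
    unfolding \<epsilon>_def model_tv_def c_def by (rule expectation_occ_pmf_diff_le[OF that])
  have "measure_pmf.expectation ?\<rho> exc \<le> measure_pmf.expectation ?\<rho> (\<lambda>x. excs x + A x)"
    by (rule expectation_mono_bounded[where B=1 and B'=2]) (auto simp: excs_def A_def exc_def)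
  also have "\<dots> = measure_pmf.expectation ?\<rho> excs + measure_pmf.expectation ?\<rho> A"
    using integrable_pmf_bounded[where f=excs, OF bounds(1)] integrable_pmf_bounded[where f=A, OF bounds(2)]
    by simp
  finally have "measure_pmf.expectation ?\<rho> exc
      \<le> measure_pmf.expectation ?\<rho> excs + measure_pmf.expectation ?\<rho> A" .
  moreover have "measure_pmf.expectation ?\<rho> excs - measure_pmf.expectation ?\<rho>s excs \<le> c * \<epsilon>"
    by (rule perturb) (simp add: excs_def)
  moreover have "measure_pmf.expectation ?\<rho> A - measure_pmf.expectation ?\<rho>s A \<le> c * \<epsilon>"
    by (rule perturb) (simp add: A_def)
  moreover have "measure_pmf.expectation ?\<rho>s A \<le> measure_pmf.expectation ?\<rho> A / 2"
    unfolding A_def by (rule expectation_ratio_gap_le_half)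
  ultimately have "measure_pmf.expectation ?\<rho> exc \<le> eps_mu \<gamma> s0 \<zeta> \<mu>h Tstar \<pi> + 3 * c * \<epsilon>"
    unfolding eps_mu by linarith
  thus ?thesis by (simp add: exc_def c_def)
qed

lemma eta_star_le_lb:
  fixes T :: "('s,'a) kernel" and \<pi> :: "('s,'a) policy"
  assumes dev: "\<forall>g\<in>G. \<bar>emp_mean D g T \<pi> - pop_mean g T \<pi>\<bar> \<le> dev"
  defines "\<epsilon> \<equiv> occ_exp (occ \<gamma> s0 Tstar \<pi>) (model_tv T)"
  shows "eta r \<gamma> s0 Tstar \<pi> - 6 * Vm * \<epsilon> / (1 - \<gamma>)^2 - Vm * eps_mu \<gamma> s0 \<zeta> \<mu>h Tstar \<pi> / (1 - \<gamma>)
           - (dev + \<zeta> * Vm * TV \<mu>h \<nu> / 2) / (1 - \<gamma>)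
         \<le> lb r \<gamma> s0 \<zeta> \<mu>h G D T \<pi>"
proof -
  let ?\<rho> = "occ_pmf s0 T \<pi>"
  define c where "c = \<gamma> / (1 - \<gamma>)"
  define L where "L = (SUP g\<in>G. \<bar>emp_mean D g T \<pi>\<bar>)"
  define E where "E = measure_pmf.expectation ?\<rho> (\<lambda>x. if ratio_exceeds \<zeta> (pmf ?\<rho>) \<mu>h x then 1 else (0::real))"
  have \<epsilon>: "\<epsilon> = measure_pmf.expectation (occ_pmf s0 Tstar \<pi>) (model_tv T)"
    unfolding \<epsilon>_def by (rule occ_exp_occ_eq_expectation[OF abs_model_tv_le])
  have \<epsilon>_nonneg: "0 \<le> \<epsilon>"
    unfolding \<epsilon> by (rule expectation_ge_const[OF model_tv_nonneg abs_model_tv_le])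
  have "L \<le> Vm * (\<epsilon> + 2 * c * \<epsilon>) + \<zeta> * Vm * TV \<mu>h \<nu> / 2 + dev"
    using SUP_abs_emp_mean_le[OF dev]
          mult_left_mono[OF expectation_occ_model_tv_le[of T \<pi>] Vmax_nonneg]
    by (simp add: L_def c_def \<epsilon>)
  moreover have "Vm * E \<le> Vm * (eps_mu \<gamma> s0 \<zeta> \<mu>h Tstar \<pi> + 3 * c * \<epsilon>)"
    unfolding E_def c_def \<epsilon> by (rule mult_left_mono[OF expectation_excess_le Vmax_nonneg])
  ultimately have "(L + Vm * E) / (1 - \<gamma>)
      \<le> (Vm * \<epsilon> / (1 - \<gamma>) + 5 * c * (Vm * \<epsilon>) / (1 - \<gamma>)) + Vm * eps_mu \<gamma> s0 \<zeta> \<mu>h Tstar \<pi> / (1 - \<gamma>)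
        + (dev + \<zeta> * Vm * TV \<mu>h \<nu> / 2) / (1 - \<gamma>)"
    using gamma_less_1 by (simp add: divide_right_mono add_divide_distrib[symmetric] algebra_simps)
  moreover have "c * (Vm * \<epsilon>) + Vm * \<epsilon> / (1 - \<gamma>) + 5 * c * (Vm * \<epsilon>) / (1 - \<gamma>)
      \<le> 6 * (Vm * \<epsilon>) / (1 - \<gamma>)^2"
    unfolding c_def using gamma_nonneg gamma_less_1 Vmax_nonneg \<epsilon>_nonneg
    by (intro discounted_error_sum_le) auto
  moreover have "eta r \<gamma> s0 Tstar \<pi> - c * (Vm * \<epsilon>) \<le> eta r \<gamma> s0 T \<pi>"
    unfolding c_def \<epsilon> by (rule eta_star_le_eta)
  moreover have "lb r \<gamma> s0 \<zeta> \<mu>h G D T \<pi> = eta r \<gamma> s0 T \<pi> - (L + Vm * E) / (1 - \<gamma>)"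
    by (simp add: lb_eq L_def E_def)
  ultimately show ?thesis by (simp add: mult.assoc)
qed

end

context offline_setting
begin

lemma second_moment_residual_le:
  assumes g: "g \<in> G"
  shows "measure_pmf.expectation \<mu> (\<lambda>z. (residual g T \<pi> z)^2) \<le> \<zeta> * Vm^2 * (1 + \<zeta> * TV \<mu>h \<nu> / 2)"
proof -
  define sa where "sa = (\<lambda>(s::'s, a::'a, s'::'s). (s, a))"
  have pointwise: "(residual g T \<pi> z)^2 \<le> \<zeta> * Vm^2 * weight \<pi> T (sa z)" for z
  proof -
    obtain s a s' where z: "z = (s, a, s')" by (cases z)
    have "(fT T g s a - g s')^2 \<le> Vm^2"
      using power_mono[OF abs_fT_minus_le[OF g] abs_ge_zero, where n=2] by simp
    moreover have "(weight \<pi> T (s, a))^2 \<le> \<zeta> * weight \<pi> T (s, a)"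
      using mult_right_mono[OF weight_le weight_nonneg, of \<pi> T "(s, a)"] by (simp add: power2_eq_square)
    ultimately have "(weight \<pi> T (s, a))^2 * (fT T g s a - g s')^2 \<le> (\<zeta> * weight \<pi> T (s, a)) * Vm^2"
      using zeta_pos weight_nonneg by (intro mult_mono) auto
    thus ?thesis by (simp add: z sa_def residual_def power_mult_distrib mult_ac)
  qed
  have "measure_pmf.expectation \<mu> (\<lambda>z. (residual g T \<pi> z)^2)
      \<le> measure_pmf.expectation \<mu> (\<lambda>z. \<zeta> * Vm^2 * weight \<pi> T (sa z))"
  proof (rule expectation_mono_bounded[OF _ _ pointwise])
    show "\<bar>(residual g T \<pi> z)^2\<bar> \<le> (\<zeta> * Vm)^2" for z
      using power_mono[OF abs_residual_le[OF g] abs_ge_zero, where n=2] by simp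
    show "\<bar>\<zeta> * Vm^2 * weight \<pi> T (sa z)\<bar> \<le> \<zeta> * Vm^2 * \<zeta>" for z
      using abs_weight_le[of \<pi> T "sa z"] zeta_pos by (simp add: abs_mult mult_left_mono)
  qed
  also have "\<dots> = \<zeta> * Vm^2 * measure_pmf.expectation \<nu> (weight \<pi> T)"
    by (simp add: sa_marg_def sa_def)
  also have "measure_pmf.expectation \<nu> (weight \<pi> T) \<le> 1 + \<zeta> * TV \<mu>h \<nu> / 2"
  proof -
    have "measure_pmf.expectation \<mu>h (\<lambda>x. weight \<pi> T x * 1) \<le> measure_pmf.expectation (occ_pmf s0 T \<pi>) (\<lambda>x. 1)"
      unfolding weight_eq_wtr using zeta_pos by (intro expectation_wtr_le) auto
    thus ?thesis
      using expectation_diff_le_half_TV[where f="weight \<pi> T", OF weight_nonneg weight_le, of \<nu> \<mu>h]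
      by (simp add: TV_commute)
  qed
  hence "\<zeta> * Vm^2 * measure_pmf.expectation \<nu> (weight \<pi> T) \<le> \<zeta> * Vm^2 * (1 + \<zeta> * TV \<mu>h \<nu> / 2)"
    using zeta_pos by (intro mult_left_mono) auto
  finally show ?thesis .
qed

lemma variance_residual_le:
  assumes g: "g \<in> G"
  shows "measure_pmf.expectation \<mu> (\<lambda>z. (residual g T \<pi> z - pop_mean g T \<pi>)^2)
     \<le> \<zeta> * Vm^2 * (1 + \<zeta> * TV \<mu>h \<nu> / 2)"
proof -
  have integrable: "integrable (measure_pmf \<mu>) (residual g T \<pi>)"
    by (rule integrable_pmf_bounded[OF abs_residual_le[OF g]])
  have integrable2: "integrable (measure_pmf \<mu>) (\<lambda>z. (residual g T \<pi> z)^2)"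
    using power_mono[OF abs_residual_le[OF g] abs_ge_zero, where n=2]
    by (intro integrable_pmf_bounded[where B="(\<zeta> * Vm)^2"]) simp
  have "measure_pmf.expectation \<mu> (\<lambda>z. (residual g T \<pi> z - pop_mean g T \<pi>)^2)
      = measure_pmf.expectation \<mu> (\<lambda>z. (residual g T \<pi> z)^2
          - 2 * pop_mean g T \<pi> * residual g T \<pi> z + (pop_mean g T \<pi>)^2)"
    by (simp add: power2_diff algebra_simps)
  also have "\<dots> = measure_pmf.expectation \<mu> (\<lambda>z. (residual g T \<pi> z)^2) - (pop_mean g T \<pi>)^2"
    using integrable integrable2 by (simp add: pop_mean_def power2_eq_square)
  also have "\<dots> \<le> \<zeta> * Vm^2 * (1 + \<zeta> * TV \<mu>h \<nu> / 2)"
    using second_moment_residual_le[OF g, of T \<pi>] zero_le_power2[of "pop_mean g T \<pi>"] by linarith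
  finally show ?thesis .
qed

lemma prob_deviation_gt_le:
  assumes g: "g \<in> G" and Vmax_pos: "0 < Vm" and dev: "0 \<le> dev" and n: "0 < n"
  defines "\<sigma>2 \<equiv> \<zeta> * Vm^2 * (1 + \<zeta> * TV \<mu>h \<nu> / 2)" and "b \<equiv> 2 * \<zeta> * Vm"
  shows "measure_pmf.prob (iid n \<mu>) {D. length D = n \<and> dev < \<bar>emp_mean D g T \<pi> - pop_mean g T \<pi>\<bar>}
     \<le> 2 * exp (- (real n * dev^2 / (2 * (\<sigma>2 + b * dev / 3))))"
proof -
  define Y where "Y = (\<lambda>z. residual g T \<pi> z - pop_mean g T \<pi>)"
  have \<sigma>2: "0 < \<sigma>2"
    unfolding \<sigma>2_def using zeta_pos Vmax_pos TV_nonneg[of \<mu>h \<nu>]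
    by (intro mult_pos_pos add_pos_nonneg) auto
  have b: "0 < b" using zeta_pos Vmax_pos by (simp add: b_def)
  have Y_bound: "\<bar>Y z\<bar> \<le> b" and neg_Y_bound: "\<bar>- Y z\<bar> \<le> b" for z
    using abs_residual_le[OF g, of T \<pi> z] abs_pop_mean_le[OF g, of T \<pi>] by (auto simp: Y_def b_def)
  have mean_Y: "measure_pmf.expectation \<mu> Y = 0"
    unfolding Y_def pop_mean_def
    using integrable_pmf_bounded[where f="residual g T \<pi>", OF abs_residual_le[OF g]] by simp
  have var_Y: "measure_pmf.expectation \<mu> (\<lambda>z. (Y z)^2) \<le> \<sigma>2"
    unfolding Y_def \<sigma>2_def by (rule variance_residual_le[OF g])
  have deviation: "emp_mean D g T \<pi> - pop_mean g T \<pi> = sum_list (map Y D) / real n" if "length D = n" for D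
    using that n by (simp add: Y_def emp_mean_def sum_list_map_minus_const field_simps)
  have neg_sum: "sum_list (map (\<lambda>z. - Y z) D) = - sum_list (map Y D)" for D
    by (induction D) auto
  have "{D. length D = n \<and> dev < \<bar>emp_mean D g T \<pi> - pop_mean g T \<pi>\<bar>}
      \<subseteq> {D. real n * dev \<le> sum_list (map Y D)} \<union> {D. real n * dev \<le> sum_list (map (\<lambda>z. - Y z) D)}"
    using n by (auto simp: deviation abs_less_iff neg_sum field_simps)
  hence "measure_pmf.prob (iid n \<mu>) {D. length D = n \<and> dev < \<bar>emp_mean D g T \<pi> - pop_mean g T \<pi>\<bar>}
      \<le> measure_pmf.prob (iid n \<mu>)
          ({D. real n * dev \<le> sum_list (map Y D)} \<union> {D. real n * dev \<le> sum_list (map (\<lambda>z. - Y z) D)})"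
    by (rule measure_pmf.finite_measure_mono) simp
  also have "\<dots> \<le> measure_pmf.prob (iid n \<mu>) {D. real n * dev \<le> sum_list (map Y D)}
        + measure_pmf.prob (iid n \<mu>) {D. real n * dev \<le> sum_list (map (\<lambda>z. - Y z) D)}"
    by (rule measure_subadditive) (simp_all add: measure_pmf.emeasure_eq_measure)
  also have "\<dots> \<le> 2 * exp (- (real n * dev^2 / (2 * (\<sigma>2 + b * dev / 3))))"
    using bernstein_iid[OF mean_Y _ Y_bound var_Y \<sigma>2 b dev, of n]
          bernstein_iid[of \<mu> "\<lambda>z. - Y z" b b \<sigma>2 dev n] mean_Y var_Y Y_bound neg_Y_bound \<sigma>2 b dev
    by (auto simp: abs_le_iff)
  finally show ?thesis .
qed

end

context offline_setting
begin

lemma eps_rho_attained: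
  assumes "finite TT" "TT \<noteq> {}"
  shows "\<exists>T\<in>TT. eps_rho \<gamma> s0 Tstar TT \<pi> = occ_exp (occ \<gamma> s0 Tstar \<pi>) (model_tv T)"
proof -
  let ?e = "\<lambda>T. occ_exp (occ \<gamma> s0 Tstar \<pi>) (model_tv T)"
  obtain T where T: "T \<in> TT" and attained: "?e T = (INF T\<in>TT. ?e T)"
    using finite_INF_attained[OF assms, of ?e] by blast
  have "eps_rho \<gamma> s0 Tstar TT \<pi> = (INF T\<in>TT. ?e T)"
    by (simp only: eps_rho_def model_tv_def)
  with T attained show ?thesis by (intro bexI[of _ T]) simp_all
qed

lemma occ_exp_model_tv_nonneg: "0 \<le> occ_exp (occ \<gamma> s0 Tstar \<pi>) (model_tv T)"
  unfolding occ_exp_occ_eq_expectation[OF abs_model_tv_le]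
  by (rule expectation_ge_const[OF model_tv_nonneg abs_model_tv_le])

lemma eps_rho_nonneg: "TT \<noteq> {} \<Longrightarrow> 0 \<le> eps_rho \<gamma> s0 Tstar TT \<pi>"
  unfolding eps_rho_def model_tv_def[symmetric]
  by (rule cINF_greatest) (auto intro: occ_exp_model_tv_nonneg)

lemma eps_mu_nonneg: "0 \<le> eps_mu \<gamma> s0 \<zeta> \<mu>h Tstar \<pi>"
  unfolding eps_mu_def
  by (subst occ_exp_occ_eq_expectation[where B=1]) (auto intro: integral_nonneg_AE)

lemma eta_star_le_Max_lb:
  assumes TT: "finite TT" "TT \<noteq> {}"
    and dev: "\<forall>g\<in>G. \<forall>T\<in>TT. \<bar>emp_mean D g T \<pi> - pop_mean g T \<pi>\<bar> \<le> dev"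
  shows "eta r \<gamma> s0 Tstar \<pi> - 6 * Vm * eps_rho \<gamma> s0 Tstar TT \<pi> / (1 - \<gamma>)^2
           - Vm * eps_mu \<gamma> s0 \<zeta> \<mu>h Tstar \<pi> / (1 - \<gamma>) - (dev + \<zeta> * Vm * TV \<mu>h \<nu> / 2) / (1 - \<gamma>)
         \<le> (MAX T\<in>TT. lb r \<gamma> s0 \<zeta> \<mu>h G D T \<pi>)"
proof -
  obtain T where T: "T \<in> TT" and eps_rho: "eps_rho \<gamma> s0 Tstar TT \<pi> = occ_exp (occ \<gamma> s0 Tstar \<pi>) (model_tv T)"
    using eps_rho_attained[OF TT] by blast
  have "lb r \<gamma> s0 \<zeta> \<mu>h G D T \<pi> \<le> (MAX T\<in>TT. lb r \<gamma> s0 \<zeta> \<mu>h G D T \<pi>)"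
    using TT T by (intro Max_ge) auto
  moreover have "\<forall>g\<in>G. \<bar>emp_mean D g T \<pi> - pop_mean g T \<pi>\<bar> \<le> dev"
    using dev T by blast
  ultimately show ?thesis
    using eta_star_le_lb[of D T \<pi> dev] unfolding eps_rho by linarith
qed

text \<open>The guarantee for the returned pair (\<pi>h, Th), with x standing for sqrt (\<zeta> \<iota> / n).\<close>
definition oracle_value :: "('s,'a) kernel set \<Rightarrow> ('s,'a) policy set \<Rightarrow> real" where
  "oracle_value TT PP = (SUP \<pi>\<in>PP. eta r \<gamma> s0 Tstar \<pi> - 6 * Vm * eps_rho \<gamma> s0 Tstar TT \<pi> / (1 - \<gamma>)^2
                                   - Vm * eps_mu \<gamma> s0 \<zeta> \<mu>h Tstar \<pi> / (1 - \<gamma>))"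

definition selected :: "('s,'a) kernel set \<Rightarrow> ('s,'a) policy set \<Rightarrow> ('s \<times> 'a \<times> 's) list
    \<Rightarrow> ('s,'a) policy \<Rightarrow> ('s,'a) kernel \<Rightarrow> bool" where
  "selected TT PP D \<pi>h Th \<longleftrightarrow>
     \<pi>h \<in> PP \<and> (\<forall>\<pi>\<in>PP. (MAX T\<in>TT. lb r \<gamma> s0 \<zeta> \<mu>h G D T \<pi>) \<le> (MAX T\<in>TT. lb r \<gamma> s0 \<zeta> \<mu>h G D T \<pi>h))
     \<and> Th \<in> TT \<and> (\<forall>T\<in>TT. lb r \<gamma> s0 \<zeta> \<mu>h G D T \<pi>h \<le> lb r \<gamma> s0 \<zeta> \<mu>h G D Th \<pi>h)"

definition guarantee :: "('s,'a) kernel set \<Rightarrow> ('s,'a) policy set \<Rightarrow> ('s,'a) policy \<Rightarrow> ('s,'a) kernel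
    \<Rightarrow> real \<Rightarrow> bool" where
  "guarantee TT PP \<pi>h Th x \<longleftrightarrow>
     eta r \<gamma> s0 Tstar \<pi>h \<ge> oracle_value TT PP - eps_V r \<gamma> s0 \<zeta> \<mu>h \<mu> Tstar G Th \<pi>h / (1 - \<gamma>)
                            - 4 * Vm / (1 - \<gamma>) * x - 2 * \<zeta> * Vm * TV \<mu>h \<nu> / (1 - \<gamma>)"

lemma oracle_value_le_lb_selected:
  assumes TT: "finite TT" "TT \<noteq> {}" and PP: "PP \<noteq> {}"
    and dev: "\<forall>g\<in>G. \<forall>T\<in>TT. \<forall>\<pi>\<in>PP. \<bar>emp_mean D g T \<pi> - pop_mean g T \<pi>\<bar> \<le> dev"
    and sel: "selected TT PP D \<pi>h Th"
  shows "oracle_value TT PP \<le> lb r \<gamma> s0 \<zeta> \<mu>h G D Th \<pi>h + (dev + \<zeta> * Vm * TV \<mu>h \<nu> / 2) / (1 - \<gamma>)"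
  unfolding oracle_value_def
proof (rule cSUP_least[OF PP])
  fix \<pi> assume \<pi>: "\<pi> \<in> PP"
  have "eta r \<gamma> s0 Tstar \<pi> - 6 * Vm * eps_rho \<gamma> s0 Tstar TT \<pi> / (1 - \<gamma>)^2
          - Vm * eps_mu \<gamma> s0 \<zeta> \<mu>h Tstar \<pi> / (1 - \<gamma>) - (dev + \<zeta> * Vm * TV \<mu>h \<nu> / 2) / (1 - \<gamma>)
        \<le> (MAX T\<in>TT. lb r \<gamma> s0 \<zeta> \<mu>h G D T \<pi>)"
    using dev \<pi> by (intro eta_star_le_Max_lb[OF TT]) blast
  also have "\<dots> \<le> (MAX T\<in>TT. lb r \<gamma> s0 \<zeta> \<mu>h G D T \<pi>h)"
    using sel \<pi> by (simp add: selected_def)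
  also have "\<dots> \<le> lb r \<gamma> s0 \<zeta> \<mu>h G D Th \<pi>h"
    using sel TT by (simp add: selected_def)
  finally show "eta r \<gamma> s0 Tstar \<pi> - 6 * Vm * eps_rho \<gamma> s0 Tstar TT \<pi> / (1 - \<gamma>)^2
          - Vm * eps_mu \<gamma> s0 \<zeta> \<mu>h Tstar \<pi> / (1 - \<gamma>)
        \<le> lb r \<gamma> s0 \<zeta> \<mu>h G D Th \<pi>h + (dev + \<zeta> * Vm * TV \<mu>h \<nu> / 2) / (1 - \<gamma>)"
    by linarith
qed

lemma guarantee_of_deviation_bound:
  assumes TT: "finite TT" "TT \<noteq> {}" and PP: "PP \<noteq> {}"
    and dev: "\<forall>g\<in>G. \<forall>T\<in>TT. \<forall>\<pi>\<in>PP. \<bar>emp_mean D g T \<pi> - pop_mean g T \<pi>\<bar> \<le> dev"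
    and sel: "selected TT PP D \<pi>h Th"
    and dev_le: "2 * dev \<le> 4 * Vm * x + \<zeta> * Vm * TV \<mu>h \<nu> / 2"
  shows "guarantee TT PP \<pi>h Th x"
proof -
  define tv where "tv = \<zeta> * Vm * TV \<mu>h \<nu>"
  define eV where "eV = eps_V r \<gamma> s0 \<zeta> \<mu>h \<mu> Tstar G Th \<pi>h"
  have "\<forall>g\<in>G. \<bar>emp_mean D g Th \<pi>h - pop_mean g Th \<pi>h\<bar> \<le> dev"
    using dev sel by (simp add: selected_def)
  hence lower: "lb r \<gamma> s0 \<zeta> \<mu>h G D Th \<pi>h - (dev + eV + tv) / (1 - \<gamma>) \<le> eta r \<gamma> s0 Tstar \<pi>h"
    unfolding eV_def tv_def by (rule lb_le_eta_star)
  have upper: "oracle_value TT PP \<le> lb r \<gamma> s0 \<zeta> \<mu>h G D Th \<pi>h + (dev + tv / 2) / (1 - \<gamma>)"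
    unfolding tv_def by (rule oracle_value_le_lb_selected[OF TT PP dev sel])
  have "oracle_value TT PP - eV / (1 - \<gamma>) - 4 * Vm / (1 - \<gamma>) * x - 2 * \<zeta> * Vm * TV \<mu>h \<nu> / (1 - \<gamma>)
      = oracle_value TT PP - (eV + 4 * Vm * x + 2 * tv) / (1 - \<gamma>)"
    by (simp add: tv_def add_divide_distrib)
  also have "\<dots> \<le> oracle_value TT PP - ((dev + tv / 2) / (1 - \<gamma>) + (dev + eV + tv) / (1 - \<gamma>))"
  proof -
    have "(dev + tv / 2) + (dev + eV + tv) \<le> eV + 4 * Vm * x + 2 * tv"
      using dev_le by (simp add: tv_def)
    hence "((dev + tv / 2) + (dev + eV + tv)) / (1 - \<gamma>) \<le> (eV + 4 * Vm * x + 2 * tv) / (1 - \<gamma>)"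
      using gamma_less_1 by (intro divide_right_mono) auto
    thus ?thesis unfolding add_divide_distrib[symmetric] by linarith
  qed
  also have "\<dots> \<le> eta r \<gamma> s0 Tstar \<pi>h"
    using lower upper by linarith
  finally show ?thesis unfolding guarantee_def eV_def .
qed

lemma guarantee_if_vacuous:
  assumes "TT \<noteq> {}" "PP \<noteq> {}" "0 \<le> x" and vacuous: "1 - \<gamma> \<le> 4 * x \<or> Vm = 0"
  shows "guarantee TT PP \<pi>h Th x"
proof -
  have "oracle_value TT PP \<le> Vm"
    unfolding oracle_value_def
  proof (rule cSUP_least[OF assms(2)])
    fix \<pi>
    have "0 \<le> 6 * Vm * eps_rho \<gamma> s0 Tstar TT \<pi> / (1 - \<gamma>)^2" "0 \<le> Vm * eps_mu \<gamma> s0 \<zeta> \<mu>h Tstar \<pi> / (1 - \<gamma>)"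
      using Vmax_nonneg eps_rho_nonneg[OF assms(1)] eps_mu_nonneg gamma_less_1 by simp_all
    thus "eta r \<gamma> s0 Tstar \<pi> - 6 * Vm * eps_rho \<gamma> s0 Tstar TT \<pi> / (1 - \<gamma>)^2
            - Vm * eps_mu \<gamma> s0 \<zeta> \<mu>h Tstar \<pi> / (1 - \<gamma>) \<le> Vm"
      using Vfun_le_Vmax[of Tstar \<pi> s0] by (simp add: eta_def)
  qed
  moreover have "Vm \<le> 4 * Vm / (1 - \<gamma>) * x"
    using vacuous
  proof
    assume "1 - \<gamma> \<le> 4 * x"
    thus ?thesis
      using mult_left_mono[OF _ Vmax_nonneg, of "1 - \<gamma>" "4 * x"] gamma_less_1 by (simp add: field_simps)
  qed simp
  moreover have "0 \<le> eps_V r \<gamma> s0 \<zeta> \<mu>h \<mu> Tstar G Th \<pi>h / (1 - \<gamma>)" "0 \<le> 2 * \<zeta> * Vm * TV \<mu>h \<nu> / (1 - \<gamma>)"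
    using eps_V_nonneg Vmax_nonneg zeta_pos TV_nonneg[of \<mu>h \<nu>] gamma_less_1 by simp_all
  ultimately show ?thesis
    using Vfun_nonneg[of Tstar \<pi>h s0] unfolding guarantee_def eta_def by linarith
qed

lemma prob_deviations_le_ge:
  assumes TT: "finite TT" and PP: "finite PP" and Vmax_pos: "0 < Vm" and dev: "0 \<le> dev" and n: "0 < n"
    and exponent: "\<iota> \<le> real n * dev^2 / (2 * (\<zeta> * Vm^2 * (1 + \<zeta> * TV \<mu>h \<nu> / 2) + 2 * \<zeta> * Vm * dev / 3))"
  shows "1 - 2 * real (card G * card TT * card PP) * exp (- \<iota>) \<le> measure_pmf.prob (iid n \<mu>)
           {D. \<forall>g\<in>G. \<forall>T\<in>TT. \<forall>\<pi>\<in>PP. \<bar>emp_mean D g T \<pi> - pop_mean g T \<pi>\<bar> \<le> dev}"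
    (is "_ \<le> measure_pmf.prob _ ?good")
proof -
  let ?p = "measure_pmf.prob (iid n \<mu>)"
  define I where "I = G \<times> TT \<times> PP"
  define bad where "bad = (\<lambda>(g, T, \<pi>). {D. length D = n \<and> dev < \<bar>emp_mean D g T \<pi> - pop_mean g T \<pi>\<bar>})"
  have "UNIV - ?good \<subseteq> {D. length D \<noteq> n} \<union> (\<Union>i\<in>I. bad i)"
    by (force simp: I_def bad_def not_le)
  hence "?p (UNIV - ?good) \<le> ?p ({D. length D \<noteq> n} \<union> (\<Union>i\<in>I. bad i))"
    by (rule measure_pmf.finite_measure_mono) simp
  also have "\<dots> \<le> ?p {D. length D \<noteq> n} + ?p (\<Union>i\<in>I. bad i)"
    by (rule measure_subadditive) (simp_all add: measure_pmf.emeasure_eq_measure)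
  also have "?p {D. length D \<noteq> n} = 0"
    using length_iid by (auto simp: measure_pmf_zero_iff)
  also have "?p (\<Union>i\<in>I. bad i) \<le> (\<Sum>i\<in>I. ?p (bad i))"
    using TT PP finite_G by (intro measure_pmf.finite_measure_subadditive_finite) (auto simp: I_def)
  also have "\<dots> \<le> (\<Sum>i\<in>I. 2 * exp (- \<iota>))"
  proof (rule sum_mono)
    fix i assume "i \<in> I"
    then obtain g T \<pi> where i: "i = (g, T, \<pi>)" and g: "g \<in> G" by (auto simp: I_def)
    have "?p (bad i) \<le> 2 * exp (- (real n * dev^2
            / (2 * (\<zeta> * Vm^2 * (1 + \<zeta> * TV \<mu>h \<nu> / 2) + 2 * \<zeta> * Vm * dev / 3))))"
      unfolding i bad_def by (simp only: prod.case) (rule prob_deviation_gt_le[OF g Vmax_pos dev n])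
    also have "\<dots> \<le> 2 * exp (- \<iota>)" using exponent by simp
    finally show "?p (bad i) \<le> 2 * exp (- \<iota>)" .
  qed
  also have "\<dots> = 2 * real (card G * card TT * card PP) * exp (- \<iota>)"
    by (simp add: I_def card_cartesian_product)
  finally show ?thesis
    using measure_pmf.prob_compl[of ?good "iid n \<mu>"] by simp
qed

lemma prob_guarantee_ge_nonvacuous:
  assumes TT: "finite TT" "TT \<noteq> {}" and PP: "finite PP" "PP \<noteq> {}" and n: "0 < n"
    and Vmax_pos: "0 < Vm" and \<iota>: "0 < \<iota>" and x_small: "sqrt (\<zeta> * \<iota> / real n) \<le> 1/4"
  shows "1 - 2 * real (card G * card TT * card PP) * exp (- \<iota>) \<le> measure_pmf.prob (iid n \<mu>)
           {D. \<forall>\<pi>h Th. selected TT PP D \<pi>h Th \<longrightarrow> guarantee TT PP \<pi>h Th (sqrt (\<zeta> * \<iota> / real n))}"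
proof -
  define dev where "dev = sqrt (2 * (\<zeta> * Vm^2 * (1 + \<zeta> * TV \<mu>h \<nu> / 2)) * \<iota> / n)
                            + 2 * (2 * \<zeta> * Vm) * \<iota> / (3 * n)"
  have \<sigma>2_pos: "0 < \<zeta> * Vm^2 * (1 + \<zeta> * TV \<mu>h \<nu> / 2)"
    using zeta_pos Vmax_pos TV_nonneg[of \<mu>h \<nu>] by (intro mult_pos_pos add_pos_nonneg) auto
  have exponent: "\<iota> \<le> real n * dev^2 / (2 * (\<zeta> * Vm^2 * (1 + \<zeta> * TV \<mu>h \<nu> / 2) + 2 * \<zeta> * Vm * dev / 3))"
    using bernstein_exponent_ge[OF \<sigma>2_pos _ _ n, of "2 * \<zeta> * Vm" \<iota>] zeta_pos Vmax_pos \<iota>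
    by (simp add: dev_def mult.assoc)
  have dev_nonneg: "0 \<le> dev"
    unfolding dev_def using \<sigma>2_pos \<iota> zeta_pos Vmax_pos by simp
  have "2 * dev \<le> 4 * Vm * sqrt (\<zeta> * \<iota> / real n) + \<zeta> * Vm * TV \<mu>h \<nu> / 2"
    using bernstein_deviation_le[OF Vmax_nonneg zeta_pos _ n, of \<iota> "\<zeta> * TV \<mu>h \<nu>"] \<iota> x_small
          zeta_pos TV_nonneg[of \<mu>h \<nu>]
    by (simp add: dev_def mult_ac)
  hence "{D. \<forall>g\<in>G. \<forall>T\<in>TT. \<forall>\<pi>\<in>PP. \<bar>emp_mean D g T \<pi> - pop_mean g T \<pi>\<bar> \<le> dev}
      \<subseteq> {D. \<forall>\<pi>h Th. selected TT PP D \<pi>h Th \<longrightarrow> guarantee TT PP \<pi>h Th (sqrt (\<zeta> * \<iota> / real n))}"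
    using guarantee_of_deviation_bound[OF TT PP(2)] by auto
  hence "measure_pmf.prob (iid n \<mu>) {D. \<forall>g\<in>G. \<forall>T\<in>TT. \<forall>\<pi>\<in>PP. \<bar>emp_mean D g T \<pi> - pop_mean g T \<pi>\<bar> \<le> dev}
      \<le> measure_pmf.prob (iid n \<mu>)
           {D. \<forall>\<pi>h Th. selected TT PP D \<pi>h Th \<longrightarrow> guarantee TT PP \<pi>h Th (sqrt (\<zeta> * \<iota> / real n))}"
    by (rule measure_pmf.finite_measure_mono) simp
  with prob_deviations_le_ge[OF TT(1) PP(1) Vmax_pos dev_nonneg n exponent] show ?thesis
    by linarith
qed

lemma prob_guarantee_ge:
  fixes TT :: "('s,'a) kernel set" and PP :: "('s,'a) policy set" and \<delta> :: real and n :: nat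
  assumes \<delta>: "0 < \<delta>" "\<delta> < 1" and n: "0 < n"
    and TT: "finite TT" "TT \<noteq> {}" and PP: "finite PP" "PP \<noteq> {}"
  defines "\<iota> \<equiv> ln (2 * real (card G) * real (card TT) * real (card PP) / \<delta>)"
  shows "1 - \<delta> \<le> measure_pmf.prob (iid n \<mu>)
           {D. \<forall>\<pi>h Th. selected TT PP D \<pi>h Th \<longrightarrow> guarantee TT PP \<pi>h Th (sqrt (\<zeta> * \<iota> / real n))}"
    (is "_ \<le> measure_pmf.prob _ ?S")
proof -
  define N where "N = real (card G * card TT * card PP)"
  have "0 < card G * card TT * card PP"
    using finite_G G_nonempty TT PP by (simp add: card_gt_0_iff)
  hence "(1::nat) \<le> card G * card TT * card PP" by simp
  hence "1 \<le> N" unfolding N_def by (metis of_nat_1 of_nat_le_iff)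
  hence \<iota>_pos: "0 < \<iota>" and exp_\<iota>: "2 * N * exp (- \<iota>) = \<delta>"
    using confidence_level[of N \<delta>] \<delta> by (simp_all add: \<iota>_def N_def mult.assoc)
  show ?thesis
  proof (cases "1 - \<gamma> \<le> 4 * sqrt (\<zeta> * \<iota> / real n) \<or> Vm = 0")
    case True
    hence "?S = UNIV"
      using TT PP zeta_pos \<iota>_pos by (auto intro: guarantee_if_vacuous)
    thus ?thesis using \<delta> by simp
  next
    case False
    hence "0 < Vm" and "sqrt (\<zeta> * \<iota> / real n) \<le> 1/4"
      using Vmax_nonneg gamma_nonneg by auto
    from prob_guarantee_ge_nonvacuous[OF TT PP n this(1) \<iota>_pos this(2)] show ?thesis
      using exp_\<iota> by (simp add: N_def)
  qed
qed

end

theorem theorem1: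
  fixes r :: "'s \<Rightarrow> 'a \<Rightarrow> real" and \<gamma> \<zeta> \<delta> :: real and s0 :: 's
    and Tstar :: "('s,'a) kernel" and \<mu> :: "('s \<times> 'a \<times> 's) pmf" and \<mu>h :: "('s \<times> 'a) pmf"
    and G :: "('s \<Rightarrow> real) set" and TT :: "('s,'a) kernel set" and PP :: "('s,'a) policy set"
    and n :: nat
  assumes "0 \<le> \<gamma>" and "\<gamma> < 1"
    and "\<forall>s a. 0 \<le> r s a" and "bdd_above (range (case_prod r))"
    and "0 < \<zeta>" and "0 < \<delta>" and "\<delta> < 1" and "0 < n"
    and "finite G" and "G \<noteq> {}" and "finite TT" and "TT \<noteq> {}" and "finite PP" and "PP \<noteq> {}"
    and "\<forall>g\<in>G. \<forall>s. 0 \<le> g s \<and> g s \<le> Vmax r \<gamma>"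
    and "\<forall>s a s'. pmf \<mu> (s, a, s') = pmf (sa_marg \<mu>) (s, a) * pmf (Tstar s a) s'"
  shows "measure_pmf.prob (iid n \<mu>)
     {D. \<forall>\<pi>h Th.
          (\<pi>h \<in> PP \<and> (\<forall>\<pi>\<in>PP. (MAX T\<in>TT. lb r \<gamma> s0 \<zeta> \<mu>h G D T \<pi>)
                                 \<le> (MAX T\<in>TT. lb r \<gamma> s0 \<zeta> \<mu>h G D T \<pi>h))
           \<and> Th \<in> TT \<and> (\<forall>T\<in>TT. lb r \<gamma> s0 \<zeta> \<mu>h G D T \<pi>h \<le> lb r \<gamma> s0 \<zeta> \<mu>h G D Th \<pi>h))
          \<longrightarrow> eta r \<gamma> s0 Tstar \<pi>h \<ge>
                (SUP \<pi>\<in>PP. eta r \<gamma> s0 Tstar \<pi>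
                   - 6 * Vmax r \<gamma> * eps_rho \<gamma> s0 Tstar TT \<pi> / (1 - \<gamma>)^2
                   - Vmax r \<gamma> * eps_mu \<gamma> s0 \<zeta> \<mu>h Tstar \<pi> / (1 - \<gamma>))
                - eps_V r \<gamma> s0 \<zeta> \<mu>h \<mu> Tstar G Th \<pi>h / (1 - \<gamma>)
                - 4 * Vmax r \<gamma> / (1 - \<gamma>)
                    * sqrt (\<zeta> * ln (2 * real (card G) * real (card TT) * real (card PP) / \<delta>) / real n)
                - 2 * \<zeta> * Vmax r \<gamma> * TV \<mu>h (sa_marg \<mu>) / (1 - \<gamma>)}
   \<ge> 1 - \<delta>"
proof -
  interpret offline_setting r \<gamma> s0 \<zeta> \<mu>h \<mu> Tstar G
    by unfold_locales (use assms in auto)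
  have "1 - \<delta> \<le> measure_pmf.prob (iid n \<mu>)
      {D. \<forall>\<pi>h Th. selected TT PP D \<pi>h Th \<longrightarrow> guarantee TT PP \<pi>h Th
            (sqrt (\<zeta> * ln (2 * real (card G) * real (card TT) * real (card PP) / \<delta>) / real n))}"
    using assms by (intro prob_guarantee_ge) auto
  thus ?thesis unfolding selected_def guarantee_def oracle_value_def .
qed

end
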